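(* Let $\mathcal U$ be an ultrafilter on a set $I$ and let $(M_i)_{i\in I}$ be a family of pointed metric spaces. Then $\mathcal F((M_i)_{\mathcal U})$ is linearly isometric to the closed linear span of $\{(\delta(x_i))_{\mathcal U}:(x_i)_{\mathcal U}\in (M_i)_{\mathcal U}\}$ in the Banach space ultraproduct $(\mathcal F(M_i))_{\mathcal U}$.
   Context: Ultraproduct of metric spaces: given a set $I$, an ultrafilter $\mathcal U$ on $I$ and metric spaces $(M_i,d_i)$ with distinguished points $0_i\in M_i$, let $\ell_\infty(M_i)=\{(x_i)_{i\in I}\in\prod_i M_i:\sup_i d_i(x_i,0_i)<\infty\}$ with pseudometric $d((x_i),(y_i))=\lim_{\mathcal U,i}d_i(x_i,y_i)$. The ultraproduct $(M_i)_{\mathcal U}$ is the metric quotient identifying points at distance $0$; classes written $(x_i)_{\mathcal U}$, base point $(0_i)_{\mathcal U}$. For Banach spaces (base point $0$) this is the usual Banach ultraproduct with norm $\|(x_i)_{\mathcal U}\|=\lim_{\mathcal U}\|x_i\|$. For a pointed metric space $M$, $\mathrm{Lip}_0(M)$ is the Banach space of real Lipschitz functions vanishing at the base point normed by the Lipschitz constant, $\delta(x)\in \mathrm{Lip}_0(M)^*$ is evaluation at $x$, and $\mathcal F(M)=\overline{\mathrm{span}}\{\delta(x):x\in M\}\subset\mathrm{Lip}_0(M)^*$ is the Lipschitz-free space. *)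

theory Defs
  imports "HOL-Analysis.Analysis"
begin

definition is_ultrafilter :: "'i filter \<Rightarrow> bool" where
  "is_ultrafilter U \<longleftrightarrow> U \<noteq> bot \<and>
     (\<forall>P. eventually P U \<or> eventually (\<lambda>i. \<not> P i) U)"

text \<open>Lip_0(M): real Lipschitz functions on M vanishing at the base point
  (represented as functions on the whole type that vanish outside M).\<close>
definition lip0 :: "'b set \<Rightarrow> ('b \<Rightarrow> 'b \<Rightarrow> real) \<Rightarrow> 'b \<Rightarrow> ('b \<Rightarrow> real) set" where
  "lip0 M d z = {f. f z = 0 \<and> (\<forall>x. x \<notin> M \<longrightarrow> f x = 0) \<and>
      (\<exists>L. \<forall>x\<in>M. \<forall>y\<in>M. \<bar>f x - f y\<bar> \<le> L * d x y)}"

definition lipconst :: "'b set \<Rightarrow> ('b \<Rightarrow> 'b \<Rightarrow> real) \<Rightarrow> ('b \<Rightarrow> real) \<Rightarrow> real" where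
  "lipconst M d f = Inf {L. 0 \<le> L \<and> (\<forall>x\<in>M. \<forall>y\<in>M. \<bar>f x - f y\<bar> \<le> L * d x y)}"

text \<open>Evaluation functional delta(x) in Lip_0(M)^*; functionals are represented
  as maps on functions that vanish off Lip_0(M).\<close>
definition fdelta :: "'b set \<Rightarrow> ('b \<Rightarrow> 'b \<Rightarrow> real) \<Rightarrow> 'b \<Rightarrow> 'b \<Rightarrow> (('b \<Rightarrow> real) \<Rightarrow> real)" where
  "fdelta M d z x = (\<lambda>f. if f \<in> lip0 M d z then f x else 0)"

definition dual_bound :: "'b set \<Rightarrow> ('b \<Rightarrow> 'b \<Rightarrow> real) \<Rightarrow> 'b \<Rightarrow> (('b \<Rightarrow> real) \<Rightarrow> real) \<Rightarrow> real \<Rightarrow> bool" where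
  "dual_bound M d z \<phi> e \<longleftrightarrow> (\<forall>f\<in>lip0 M d z. lipconst M d f \<le> 1 \<longrightarrow> \<bar>\<phi> f\<bar> \<le> e)"

definition dnorm :: "'b set \<Rightarrow> ('b \<Rightarrow> 'b \<Rightarrow> real) \<Rightarrow> 'b \<Rightarrow> (('b \<Rightarrow> real) \<Rightarrow> real) \<Rightarrow> real" where
  "dnorm M d z \<phi> = Inf {e. 0 \<le> e \<and> dual_bound M d z \<phi> e}"

definition fspan :: "'b set \<Rightarrow> ('b \<Rightarrow> 'b \<Rightarrow> real) \<Rightarrow> 'b \<Rightarrow> (('b \<Rightarrow> real) \<Rightarrow> real) set" where
  "fspan M d z = {\<psi>. \<exists>S c. finite S \<and> S \<subseteq> M \<and>
      \<psi> = (\<lambda>f. \<Sum>x\<in>S. c x * fdelta M d z x f)}"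

text \<open>Lipschitz-free space F(M): closure of the span in the dual norm.\<close>
definition free :: "'b set \<Rightarrow> ('b \<Rightarrow> 'b \<Rightarrow> real) \<Rightarrow> 'b \<Rightarrow> (('b \<Rightarrow> real) \<Rightarrow> real) set" where
  "free M d z = {\<phi>. (\<forall>f. f \<notin> lip0 M d z \<longrightarrow> \<phi> f = 0) \<and>
      (\<forall>e>0. \<exists>\<psi>\<in>fspan M d z. dual_bound M d z (\<lambda>f. \<phi> f - \<psi> f) e)}"

definition linfM :: "('i \<Rightarrow> 'a set) \<Rightarrow> ('i \<Rightarrow> 'a \<Rightarrow> 'a \<Rightarrow> real) \<Rightarrow> ('i \<Rightarrow> 'a) \<Rightarrow> ('i \<Rightarrow> 'a) set" where
  "linfM M d z = {x. (\<forall>i. x i \<in> M i) \<and> (\<exists>B. \<forall>i. d i (x i) (z i) \<le> B)}"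

definition updist :: "'i filter \<Rightarrow> ('i \<Rightarrow> 'a \<Rightarrow> 'a \<Rightarrow> real) \<Rightarrow> ('i \<Rightarrow> 'a) \<Rightarrow> ('i \<Rightarrow> 'a) \<Rightarrow> real" where
  "updist U d x y = Lim U (\<lambda>i. d i (x i) (y i))"

definition upclass :: "'i filter \<Rightarrow> ('i \<Rightarrow> 'a set) \<Rightarrow> ('i \<Rightarrow> 'a \<Rightarrow> 'a \<Rightarrow> real) \<Rightarrow> ('i \<Rightarrow> 'a) \<Rightarrow> ('i \<Rightarrow> 'a) \<Rightarrow> ('i \<Rightarrow> 'a) set" where
  "upclass U M d z x = {y \<in> linfM M d z. updist U d x y = 0}"

definition uprod :: "'i filter \<Rightarrow> ('i \<Rightarrow> 'a set) \<Rightarrow> ('i \<Rightarrow> 'a \<Rightarrow> 'a \<Rightarrow> real) \<Rightarrow> ('i \<Rightarrow> 'a) \<Rightarrow> ('i \<Rightarrow> 'a) set set" where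
  "uprod U M d z = upclass U M d z ` linfM M d z"

definition uprod_dist :: "'i filter \<Rightarrow> ('i \<Rightarrow> 'a \<Rightarrow> 'a \<Rightarrow> real) \<Rightarrow> ('i \<Rightarrow> 'a) set \<Rightarrow> ('i \<Rightarrow> 'a) set \<Rightarrow> real" where
  "uprod_dist U d A B = updist U d (SOME x. x \<in> A) (SOME y. y \<in> B)"

definition uprod_base :: "'i filter \<Rightarrow> ('i \<Rightarrow> 'a set) \<Rightarrow> ('i \<Rightarrow> 'a \<Rightarrow> 'a \<Rightarrow> real) \<Rightarrow> ('i \<Rightarrow> 'a) \<Rightarrow> ('i \<Rightarrow> 'a) set" where
  "uprod_base U M d z = upclass U M d z z"

section \<open>Banach ultraproduct (F(M_i))_U, via representatives\<close>

definition linfF :: "('i \<Rightarrow> 'a set) \<Rightarrow> ('i \<Rightarrow> 'a \<Rightarrow> 'a \<Rightarrow> real) \<Rightarrow> ('i \<Rightarrow> 'a)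
    \<Rightarrow> ('i \<Rightarrow> ('a \<Rightarrow> real) \<Rightarrow> real) set" where
  "linfF M d z = {\<Phi>. (\<forall>i. \<Phi> i \<in> free (M i) (d i) (z i)) \<and>
      (\<exists>B. \<forall>i. dnorm (M i) (d i) (z i) (\<Phi> i) \<le> B)}"

text \<open>Ultraproduct seminorm; its zero set is the kernel of the quotient map.\<close>
definition unorm :: "'i filter \<Rightarrow> ('i \<Rightarrow> 'a set) \<Rightarrow> ('i \<Rightarrow> 'a \<Rightarrow> 'a \<Rightarrow> real) \<Rightarrow> ('i \<Rightarrow> 'a)
    \<Rightarrow> ('i \<Rightarrow> ('a \<Rightarrow> real) \<Rightarrow> real) \<Rightarrow> real" where
  "unorm U M d z \<Phi> = Lim U (\<lambda>i. dnorm (M i) (d i) (z i) (\<Phi> i))"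

definition udelta :: "('i \<Rightarrow> 'a set) \<Rightarrow> ('i \<Rightarrow> 'a \<Rightarrow> 'a \<Rightarrow> real) \<Rightarrow> ('i \<Rightarrow> 'a) \<Rightarrow> ('i \<Rightarrow> 'a)
    \<Rightarrow> ('i \<Rightarrow> ('a \<Rightarrow> real) \<Rightarrow> real)" where
  "udelta M d z x = (\<lambda>i. fdelta (M i) (d i) (z i) (x i))"

text \<open>Representatives of elements of the closed linear span of
  {(delta(x_i))_U : (x_i)_U in (M_i)_U} in (F(M_i))_U.\<close>
definition udelta_span_closure :: "'i filter \<Rightarrow> ('i \<Rightarrow> 'a set) \<Rightarrow> ('i \<Rightarrow> 'a \<Rightarrow> 'a \<Rightarrow> real) \<Rightarrow> ('i \<Rightarrow> 'a)
    \<Rightarrow> ('i \<Rightarrow> ('a \<Rightarrow> real) \<Rightarrow> real) set" where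
  "udelta_span_closure U M d z = {\<Phi> \<in> linfF M d z. \<forall>e>0. \<exists>S c.
      finite S \<and> S \<subseteq> linfM M d z \<and>
      unorm U M d z (\<lambda>i f. \<Phi> i f - (\<Sum>x\<in>S. c x * udelta M d z x i f)) \<le> e}"

end

theory Submission
  imports Defs
begin

text \<open>
  For finitely many points \<open>x\<^sup>1, \<dots>, x\<^sup>n\<close> of \<open>\<ell>\<^sub>\<infinity>(M\<^sub>i)\<close> and scalars \<open>c\<^sub>k\<close>, the norm of
  \<open>\<Sum> c\<^sub>k \<delta>((x\<^sup>k\<^sub>i)\<^sub>U)\<close> in \<open>\<F>((M\<^sub>i)\<^sub>U)\<close> equals the \<open>U\<close>-limit of the norms of \<open>\<Sum> c\<^sub>k \<delta>(x\<^sup>k\<^sub>i)\<close>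
  in \<open>\<F>(M\<^sub>i)\<close>. A 1-Lipschitz function on \<open>(M\<^sub>i)\<^sub>U\<close>, shrunk by a factor \<open>t < 1\<close>, is
  1-Lipschitz on the finitely many points \<open>x\<^sup>k\<^sub>i\<close> for \<open>U\<close>-almost every \<open>i\<close> and extends to
  \<open>M\<^sub>i\<close> by McShane's formula; conversely the ultralimit of norming 1-Lipschitz functions on
  the \<open>M\<^sub>i\<close> is 1-Lipschitz on \<open>(M\<^sub>i)\<^sub>U\<close>. Both spaces are complete, so this isometry between
  finite combinations extends from the dense span of the \<open>\<delta>(x)\<close> to a linear isometry of
  \<open>\<F>((M\<^sub>i)\<^sub>U)\<close> onto the closed span of the \<open>(\<delta>(x\<^sub>i))\<^sub>U\<close>.
\<close>

lemma ultrafilter_tendsto_Lim: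
  fixes h :: "'i \<Rightarrow> real"
  assumes U: "is_ultrafilter U" and bounded: "\<forall>i. \<bar>h i\<bar> \<le> B"
  shows "(h \<longlongrightarrow> Lim U h) U"
proof -
  have U_proper: "U \<noteq> bot" using U by (simp add: is_ultrafilter_def)
  let ?F = "filtermap h U"
  have "eventually (\<lambda>x. x \<in> {-B..B}) ?F"
    unfolding eventually_filtermap
    by (intro always_eventually) (use bounded in \<open>simp add: abs_le_iff minus_le_iff\<close>)
  moreover have "?F \<noteq> bot" using U_proper by (simp add: filtermap_bot_iff)
  ultimately obtain l where l: "inf (nhds l) ?F \<noteq> bot"
    using compact_filter[THEN iffD1, OF compact_Icc] by blast
  have "(h \<longlongrightarrow> l) U"
  proof (rule topological_tendstoI)
    fix S :: "real set" assume "open S" "l \<in> S"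
    then have near_l: "eventually (\<lambda>x. x \<in> S) (nhds l)" by (rule eventually_nhds_in_open)
    have "\<not> eventually (\<lambda>x. x \<notin> S) ?F"
    proof
      assume "eventually (\<lambda>x. x \<notin> S) ?F"
      with near_l have "eventually (\<lambda>_. False) (inf (nhds l) ?F)"
        unfolding eventually_inf by blast
      with l show False by (simp add: eventually_False)
    qed
    then show "eventually (\<lambda>i. h i \<in> S) U"
      using U unfolding is_ultrafilter_def eventually_filtermap by blast
  qed
  then show ?thesis using U_proper tendsto_Lim by blast
qed

lemma geometric_Cauchy_limit:
  fixes a :: "nat \<Rightarrow> real"
  assumes step: "\<And>m. \<bar>a m - a (Suc m)\<bar> \<le> C * (1/2)^m"
  shows "\<exists>l. a \<longlonglongrightarrow> l \<and> (\<forall>n. \<bar>l - a n\<bar> \<le> 2 * C * (1/2)^n)"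
proof -
  have tail: "\<bar>a m - a n\<bar> \<le> 2 * C * ((1/2)^n - (1/2)^m)" if "n \<le> m" for m n
    using that
  proof (induction m rule: dec_induct)
    case (step m)
    have "\<bar>a (Suc m) - a n\<bar> \<le> \<bar>a m - a n\<bar> + \<bar>a m - a (Suc m)\<bar>" by linarith
    also have "\<dots> \<le> 2 * C * ((1/2)^n - (1/2)^m) + C * (1/2)^m" using step.IH assms[of m] by linarith
    also have "\<dots> = 2 * C * ((1/2)^n - (1/2)^Suc m)" by (simp add: algebra_simps)
    finally show ?case .
  qed simp
  have "0 \<le> C" using step[of 0] by auto
  have tail': "\<bar>a m - a n\<bar> \<le> 2 * C * (1/2)^n" if "n \<le> m" for m n
  proof -
    have "2 * C * ((1/2)^n - (1/2)^m) \<le> 2 * C * (1/2::real)^n"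
      using \<open>0 \<le> C\<close> by (intro mult_left_mono) auto
    then show ?thesis using tail[OF that] by linarith
  qed
  have "Cauchy a"
  proof (rule metric_CauchyI)
    fix e :: real assume "0 < e"
    then obtain N where N: "(1/2::real)^N < e / (4 * C + 1)"
      using real_arch_pow_inv[of "e / (4 * C + 1)" "1/2"] \<open>0 \<le> C\<close> by auto
    have "4 * C * (1/2::real)^N \<le> (4 * C + 1) * (1/2)^N" by simp
    also have "\<dots> < e" using N \<open>0 \<le> C\<close> by (simp add: pos_less_divide_eq mult.commute)
    finally have small: "4 * C * (1/2::real)^N < e" .
    have "dist (a m) (a n) < e" if "N \<le> m" "N \<le> n" for m n
      using tail'[OF that(1)] tail'[OF that(2)] small by (simp add: dist_real_def)
    then show "\<exists>N. \<forall>m\<ge>N. \<forall>n\<ge>N. dist (a m) (a n) < e" by blast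
  qed
  then obtain l where l: "a \<longlonglongrightarrow> l" using Cauchy_convergent_iff convergent_def by blast
  have "\<bar>l - a n\<bar> \<le> 2 * C * (1/2)^n" for n
  proof (rule tendsto_upperbound)
    show "(\<lambda>m. \<bar>a m - a n\<bar>) \<longlonglongrightarrow> \<bar>l - a n\<bar>" by (intro tendsto_intros l)
    show "eventually (\<lambda>m. \<bar>a m - a n\<bar> \<le> 2 * C * (1/2)^n) sequentially"
      using tail' by (auto simp: eventually_sequentially)
  qed simp
  then show ?thesis using l by blast
qed

lemma sum_lincomb_union:
  fixes c1 c2 h :: "'x \<Rightarrow> real"
  assumes "finite S1" "finite S2"
  shows "(\<Sum>x\<in>S1 \<union> S2. (a * (if x \<in> S1 then c1 x else 0) + b * (if x \<in> S2 then c2 x else 0)) * h x)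
    = a * (\<Sum>x\<in>S1. c1 x * h x) + b * (\<Sum>x\<in>S2. c2 x * h x)"
proof -
  have restrict: "(\<Sum>x\<in>S1 \<union> S2. (if x \<in> S then c x else 0) * h x) = (\<Sum>x\<in>S. c x * h x)"
    if "S \<subseteq> S1 \<union> S2" for S and c :: "'x \<Rightarrow> real"
    by (rule sum.mono_neutral_cong_right) (use assms that in auto)
  have "(\<Sum>x\<in>S1 \<union> S2. (a * (if x \<in> S1 then c1 x else 0) + b * (if x \<in> S2 then c2 x else 0)) * h x)
    = a * (\<Sum>x\<in>S1 \<union> S2. (if x \<in> S1 then c1 x else 0) * h x)
      + b * (\<Sum>x\<in>S1 \<union> S2. (if x \<in> S2 then c2 x else 0) * h x)"
    by (simp add: distrib_right sum.distrib sum_distrib_left mult.assoc)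
  also have "\<dots> = a * (\<Sum>x\<in>S1. c1 x * h x) + b * (\<Sum>x\<in>S2. c2 x * h x)"
    using restrict[of S1 c1] restrict[of S2 c2] by simp
  finally show ?thesis .
qed

lemma abs_lincomb_le_eps:
  fixes a b x y \<epsilon> :: real
  assumes "x \<le> \<epsilon> / (\<bar>a\<bar> + \<bar>b\<bar> + 1)" "y \<le> \<epsilon> / (\<bar>a\<bar> + \<bar>b\<bar> + 1)" "0 < \<epsilon>"
  shows "\<bar>a\<bar> * x + \<bar>b\<bar> * y \<le> \<epsilon>"
proof -
  let ?e = "\<epsilon> / (\<bar>a\<bar> + \<bar>b\<bar> + 1)"
  have "\<bar>a\<bar> * x + \<bar>b\<bar> * y \<le> \<bar>a\<bar> * ?e + \<bar>b\<bar> * ?e"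
    using assms by (intro add_mono mult_left_mono) auto
  also have "\<dots> = (\<bar>a\<bar> + \<bar>b\<bar>) * ?e" by (rule distrib_right[symmetric])
  also have "\<dots> \<le> (\<bar>a\<bar> + \<bar>b\<bar> + 1) * ?e" using assms(3) by (intro mult_right_mono) auto
  also have "\<dots> = \<epsilon>" by (simp add: add_pos_nonneg)
  finally show ?thesis .
qed

lemma sum_group_by_image:
  fixes c :: "'x \<Rightarrow> real"
  assumes "finite S"
  shows "(\<Sum>x\<in>S. c x * F (g x)) = (\<Sum>y\<in>g ` S. (\<Sum>x\<in>{x\<in>S. g x = y}. c x) * F y)"
proof -
  have "(\<Sum>x\<in>S. c x * F (g x)) = (\<Sum>y\<in>g ` S. \<Sum>x\<in>{x\<in>S. g x = y}. c x * F (g x))"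
    by (rule sum.image_gen[OF assms])
  also have "\<dots> = (\<Sum>y\<in>g ` S. (\<Sum>x\<in>{x\<in>S. g x = y}. c x) * F y)"
    by (rule sum.cong) (auto simp: sum_distrib_right)
  finally show ?thesis .
qed

lemma Least_first_failure:
  fixes P :: "nat \<Rightarrow> bool"
  shows "\<forall>k<m. P k \<Longrightarrow> (LEAST k. k = m \<or> \<not> P k) = m"
  by (rule Least_equality) (auto simp: not_less[symmetric])

lemma Least_first_failure_Suc:
  fixes P :: "nat \<Rightarrow> bool"
  assumes "(LEAST k. k = Suc m \<or> \<not> P k) \<noteq> (LEAST k. k = m \<or> \<not> P k)"
  shows "(LEAST k. k = m \<or> \<not> P k) = m" "(LEAST k. k = Suc m \<or> \<not> P k) = Suc m" "P m"
proof -
  have "\<forall>k\<le>m. P k"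
  proof (rule ccontr)
    assume "\<not> (\<forall>k\<le>m. P k)"
    then obtain k where k: "k \<le> m" "\<not> P k" "\<forall>k'<k. P k'"
      using exists_least_iff[of "\<lambda>k. k \<le> m \<and> \<not> P k"] by (auto dest: order.strict_trans1)
    then have "(LEAST k. k = m \<or> \<not> P k) = k" "(LEAST k. k = Suc m \<or> \<not> P k) = k"
      by (auto intro!: Least_equality simp: not_less[symmetric])
    with assms show False by simp
  qed
  then show "(LEAST k. k = m \<or> \<not> P k) = m" "(LEAST k. k = Suc m \<or> \<not> P k) = Suc m" "P m"
    by (auto intro: Least_first_failure)
qed

definition lip1_ball :: "'b set \<Rightarrow> ('b \<Rightarrow> 'b \<Rightarrow> real) \<Rightarrow> 'b \<Rightarrow> ('b \<Rightarrow> real) set" where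
  "lip1_ball M d z = {f. f z = 0 \<and> (\<forall>x. x \<notin> M \<longrightarrow> f x = 0) \<and>
      (\<forall>x\<in>M. \<forall>y\<in>M. \<bar>f x - f y\<bar> \<le> d x y)}"

lemma abs_diff_le_lipconst:
  assumes nonneg: "\<forall>x\<in>M. \<forall>y\<in>M. 0 \<le> d x y" and f: "f \<in> lip0 M d z" and xy: "x \<in> M" "y \<in> M"
  shows "\<bar>f x - f y\<bar> \<le> lipconst M d f * d x y"
proof -
  define S where "S = {L. 0 \<le> L \<and> (\<forall>x\<in>M. \<forall>y\<in>M. \<bar>f x - f y\<bar> \<le> L * d x y)}"
  obtain L where L: "\<forall>x\<in>M. \<forall>y\<in>M. \<bar>f x - f y\<bar> \<le> L * d x y"
    using f unfolding lip0_def by auto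
  have "max L 0 \<in> S" unfolding S_def
  proof (intro CollectI conjI ballI)
    fix x y assume "x \<in> M" "y \<in> M"
    then show "\<bar>f x - f y\<bar> \<le> max L 0 * d x y"
      using L nonneg by (meson max.cobounded1 mult_right_mono order_trans)
  qed simp
  show ?thesis
  proof (cases "d x y = 0")
    case True
    then show ?thesis using L xy by (metis mult_zero_right)
  next
    case False
    then have pos: "0 < d x y" using nonneg xy by (metis order_le_less)
    have "\<bar>f x - f y\<bar> / d x y \<le> Inf S"
    proof (rule cInf_greatest)
      show "S \<noteq> {}" using \<open>max L 0 \<in> S\<close> by blast
    next
      fix L' assume "L' \<in> S"
      then show "\<bar>f x - f y\<bar> / d x y \<le> L'" using pos xy by (simp add: S_def pos_divide_le_eq)
    qed
    then show ?thesis using pos by (simp add: lipconst_def S_def pos_divide_le_eq)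
  qed
qed

lemma lip1_ball_iff:
  assumes nonneg: "\<forall>x\<in>M. \<forall>y\<in>M. 0 \<le> d x y"
  shows "f \<in> lip0 M d z \<and> lipconst M d f \<le> 1 \<longleftrightarrow> f \<in> lip1_ball M d z"
proof
  assume f: "f \<in> lip1_ball M d z"
  then have "f \<in> lip0 M d z" unfolding lip1_ball_def lip0_def by (auto intro!: exI[of _ 1])
  moreover have "lipconst M d f \<le> 1" unfolding lipconst_def
    by (rule cInf_lower) (use f in \<open>auto simp: lip1_ball_def intro!: bdd_belowI[of _ 0]\<close>)
  ultimately show "f \<in> lip0 M d z \<and> lipconst M d f \<le> 1" by simp
next
  assume f: "f \<in> lip0 M d z \<and> lipconst M d f \<le> 1"
  have "\<bar>f x - f y\<bar> \<le> d x y" if "x \<in> M" "y \<in> M" for x y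
  proof -
    have "lipconst M d f * d x y \<le> 1 * d x y"
      using f nonneg that by (intro mult_right_mono) auto
    then show ?thesis using abs_diff_le_lipconst[OF nonneg conjunct1[OF f] that] by simp
  qed
  then show "f \<in> lip1_ball M d z" using f unfolding lip0_def lip1_ball_def by auto
qed

section \<open>The dual norm on \<open>Lip\<^sub>0\<close> and the free space\<close>

text \<open>For a functional that is not dual-bounded, \<^const>\<open>dnorm\<close> is the junk value \<open>Inf {}\<close>,
  so the norm estimates below carry this hypothesis.\<close>

definition dual_bounded :: "'b set \<Rightarrow> ('b \<Rightarrow> 'b \<Rightarrow> real) \<Rightarrow> 'b \<Rightarrow> (('b \<Rightarrow> real) \<Rightarrow> real) \<Rightarrow> bool" where
  "dual_bounded M d z \<phi> \<longleftrightarrow> (\<exists>e. dual_bound M d z \<phi> e)"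

locale pointed_dist =
  fixes M :: "'b set" and d :: "'b \<Rightarrow> 'b \<Rightarrow> real" and z :: 'b
  assumes dist_nonneg: "x \<in> M \<Longrightarrow> y \<in> M \<Longrightarrow> 0 \<le> d x y"
    and base_in: "z \<in> M"
begin

lemma dual_bound_iff: "dual_bound M d z \<phi> e \<longleftrightarrow> (\<forall>f\<in>lip1_ball M d z. \<bar>\<phi> f\<bar> \<le> e)"
  unfolding dual_bound_def using lip1_ball_iff[of M d] dist_nonneg by blast

lemma lip1_ball_lip0: "f \<in> lip1_ball M d z \<Longrightarrow> f \<in> lip0 M d z"
  using lip1_ball_iff[of M d] dist_nonneg by blast

lemma zero_in_lip1_ball: "(\<lambda>_. 0) \<in> lip1_ball M d z"
  using dist_nonneg by (simp add: lip1_ball_def)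

lemma lip1_ball_abs_le: "f \<in> lip1_ball M d z \<Longrightarrow> x \<in> M \<Longrightarrow> \<bar>f x\<bar> \<le> d x z"
  using base_in unfolding lip1_ball_def by force

lemma dual_boundedI: "(\<And>f. f \<in> lip1_ball M d z \<Longrightarrow> \<bar>\<phi> f\<bar> \<le> e) \<Longrightarrow> dual_bounded M d z \<phi>"
  unfolding dual_bounded_def dual_bound_iff by blast

lemma dnorm_le: "dual_bound M d z \<phi> e \<Longrightarrow> dnorm M d z \<phi> \<le> e"
proof -
  assume bound: "dual_bound M d z \<phi> e"
  then have "0 \<le> e" using zero_in_lip1_ball unfolding dual_bound_iff by force
  with bound show ?thesis unfolding dnorm_def by (intro cInf_lower bdd_belowI[of _ 0]) auto
qed

lemma dnorm_le_ballI: "(\<And>f. f \<in> lip1_ball M d z \<Longrightarrow> \<bar>\<phi> f\<bar> \<le> e) \<Longrightarrow> dnorm M d z \<phi> \<le> e"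
  by (rule dnorm_le) (simp add: dual_bound_iff)

lemma abs_le_dnorm:
  assumes "dual_bounded M d z \<phi>" and f: "f \<in> lip1_ball M d z"
  shows "\<bar>\<phi> f\<bar> \<le> dnorm M d z \<phi>"
  unfolding dnorm_def
proof (rule cInf_greatest)
  obtain e where "dual_bound M d z \<phi> e" using assms(1) by (auto simp: dual_bounded_def)
  moreover have "0 \<le> e" using calculation zero_in_lip1_ball unfolding dual_bound_iff by force
  ultimately show "{e. 0 \<le> e \<and> dual_bound M d z \<phi> e} \<noteq> {}" by blast
qed (use f in \<open>auto simp: dual_bound_iff\<close>)

lemma dnorm_le_iff: "dual_bounded M d z \<phi> \<Longrightarrow> dnorm M d z \<phi> \<le> e \<longleftrightarrow> dual_bound M d z \<phi> e"
  using dnorm_le abs_le_dnorm by (force simp: dual_bound_iff)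

lemma dnorm_nonneg: "dual_bounded M d z \<phi> \<Longrightarrow> 0 \<le> dnorm M d z \<phi>"
  using abs_le_dnorm[OF _ zero_in_lip1_ball] abs_ge_zero order_trans by blast

lemma dnorm_approx:
  assumes "dual_bounded M d z \<phi>" "0 < \<epsilon>"
  shows "\<exists>f\<in>lip1_ball M d z. dnorm M d z \<phi> - \<epsilon> < \<bar>\<phi> f\<bar>"
proof (rule ccontr)
  assume "\<not> ?thesis"
  then have "dnorm M d z \<phi> \<le> dnorm M d z \<phi> - \<epsilon>" by (intro dnorm_le_ballI) auto
  with \<open>0 < \<epsilon>\<close> show False by simp
qed

lemma dual_bound_lincomb:
  assumes "dual_bounded M d z \<phi>" "dual_bounded M d z \<psi>"
  shows "dual_bound M d z (\<lambda>f. a * \<phi> f + b * \<psi> f) (\<bar>a\<bar> * dnorm M d z \<phi> + \<bar>b\<bar> * dnorm M d z \<psi>)"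
  unfolding dual_bound_iff
proof
  fix f assume f: "f \<in> lip1_ball M d z"
  have "\<bar>a * \<phi> f + b * \<psi> f\<bar> \<le> \<bar>a\<bar> * \<bar>\<phi> f\<bar> + \<bar>b\<bar> * \<bar>\<psi> f\<bar>"
    by (metis abs_mult abs_triangle_ineq)
  also have "\<dots> \<le> \<bar>a\<bar> * dnorm M d z \<phi> + \<bar>b\<bar> * dnorm M d z \<psi>"
    using assms f by (intro add_mono mult_left_mono abs_le_dnorm) auto
  finally show "\<bar>a * \<phi> f + b * \<psi> f\<bar> \<le> \<bar>a\<bar> * dnorm M d z \<phi> + \<bar>b\<bar> * dnorm M d z \<psi>" .
qed

lemma dual_bounded_lincomb:
  "dual_bounded M d z \<phi> \<Longrightarrow> dual_bounded M d z \<psi> \<Longrightarrow> dual_bounded M d z (\<lambda>f. a * \<phi> f + b * \<psi> f)"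
  using dual_bound_lincomb unfolding dual_bounded_def by blast

lemma dnorm_lincomb_le:
  "dual_bounded M d z \<phi> \<Longrightarrow> dual_bounded M d z \<psi> \<Longrightarrow>
    dnorm M d z (\<lambda>f. a * \<phi> f + b * \<psi> f) \<le> \<bar>a\<bar> * dnorm M d z \<phi> + \<bar>b\<bar> * dnorm M d z \<psi>"
  using dual_bound_lincomb dnorm_le by blast

lemma dual_bounded_diff:
  "dual_bounded M d z \<phi> \<Longrightarrow> dual_bounded M d z \<psi> \<Longrightarrow> dual_bounded M d z (\<lambda>f. \<phi> f - \<psi> f)"
  using dual_bounded_lincomb[of \<phi> \<psi> 1 "-1"] by simp

lemma dnorm_lincomb_diff_le:
  assumes "dual_bounded M d z \<phi>" "dual_bounded M d z \<phi>'" "dual_bounded M d z \<psi>" "dual_bounded M d z \<psi>'"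
  shows "dnorm M d z (\<lambda>f. (a * \<phi> f + b * \<psi> f) - (a * \<phi>' f + b * \<psi>' f))
    \<le> \<bar>a\<bar> * dnorm M d z (\<lambda>f. \<phi> f - \<phi>' f) + \<bar>b\<bar> * dnorm M d z (\<lambda>f. \<psi> f - \<psi>' f)"
proof -
  have "(\<lambda>f. (a * \<phi> f + b * \<psi> f) - (a * \<phi>' f + b * \<psi>' f)) = (\<lambda>f. a * (\<phi> f - \<phi>' f) + b * (\<psi> f - \<psi>' f))"
    by (simp add: algebra_simps)
  then show ?thesis
    using dnorm_lincomb_le[OF dual_bounded_diff[OF assms(1,2)] dual_bounded_diff[OF assms(3,4)]] by simp
qed

lemma dnorm_triangle:
  assumes "dual_bounded M d z \<phi>" "dual_bounded M d z \<psi>" "dual_bounded M d z \<xi>"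
  shows "dnorm M d z (\<lambda>f. \<phi> f - \<xi> f) \<le> dnorm M d z (\<lambda>f. \<phi> f - \<psi> f) + dnorm M d z (\<lambda>f. \<psi> f - \<xi> f)"
proof (rule dnorm_le_ballI)
  fix f assume f: "f \<in> lip1_ball M d z"
  have "\<bar>\<phi> f - \<xi> f\<bar> \<le> \<bar>\<phi> f - \<psi> f\<bar> + \<bar>\<psi> f - \<xi> f\<bar>" by linarith
  also have "\<dots> \<le> dnorm M d z (\<lambda>f. \<phi> f - \<psi> f) + dnorm M d z (\<lambda>f. \<psi> f - \<xi> f)"
    using abs_le_dnorm[OF dual_bounded_diff f] assms by (simp add: add_mono)
  finally show "\<bar>\<phi> f - \<xi> f\<bar> \<le> \<dots>" .
qed

lemma dnorm_commute: "dnorm M d z (\<lambda>f. \<phi> f - \<psi> f) = dnorm M d z (\<lambda>f. \<psi> f - \<phi> f)"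
  unfolding dnorm_def dual_bound_iff by (simp add: abs_minus_commute)

lemma dnorm_reverse_triangle:
  assumes "dual_bounded M d z \<phi>" "dual_bounded M d z \<psi>"
  shows "\<bar>dnorm M d z \<phi> - dnorm M d z \<psi>\<bar> \<le> dnorm M d z (\<lambda>f. \<phi> f - \<psi> f)"
proof -
  have le: "dnorm M d z \<phi> \<le> dnorm M d z (\<lambda>f. \<phi> f - \<psi> f) + dnorm M d z \<psi>"
    if "dual_bounded M d z \<phi>" "dual_bounded M d z \<psi>" for \<phi> \<psi>
  proof (rule dnorm_le_ballI)
    fix f assume f: "f \<in> lip1_ball M d z"
    have "\<bar>\<phi> f\<bar> \<le> \<bar>\<phi> f - \<psi> f\<bar> + \<bar>\<psi> f\<bar>" by linarith
    also have "\<dots> \<le> dnorm M d z (\<lambda>f. \<phi> f - \<psi> f) + dnorm M d z \<psi>"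
      using abs_le_dnorm[OF dual_bounded_diff f] abs_le_dnorm[OF _ f] that by (simp add: add_mono)
    finally show "\<bar>\<phi> f\<bar> \<le> \<dots>" .
  qed
  show ?thesis
    unfolding abs_le_iff using le[OF assms] le[OF assms(2,1)] dnorm_commute[of \<phi> \<psi>] by linarith
qed

lemma dnorm_zero: "dnorm M d z (\<lambda>f. 0) = 0"
  by (intro antisym dnorm_le_ballI dnorm_nonneg dual_boundedI) auto

lemma sum_fdelta_in_fspan:
  assumes "finite S" "\<And>x. x \<in> S \<Longrightarrow> p x \<in> M"
  shows "(\<lambda>f. \<Sum>x\<in>S. c x * fdelta M d z (p x) f) \<in> fspan M d z"
proof -
  have "(\<lambda>f. \<Sum>x\<in>S. c x * fdelta M d z (p x) f)
      = (\<lambda>f. \<Sum>y\<in>p ` S. (\<Sum>x\<in>{x\<in>S. p x = y}. c x) * fdelta M d z y f)"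
    by (intro ext sum_group_by_image[OF assms(1)])
  moreover have "finite (p ` S)" "p ` S \<subseteq> M" using assms by auto
  ultimately show ?thesis unfolding fspan_def
    by (intro CollectI exI[of _ "p ` S"] exI[of _ "\<lambda>y. \<Sum>x\<in>{x\<in>S. p x = y}. c x"]) simp
qed

lemma fspan_dual_bounded:
  assumes "\<psi> \<in> fspan M d z"
  shows "dual_bounded M d z \<psi>"
proof -
  obtain S c where S: "finite S" "S \<subseteq> M" and \<psi>: "\<psi> = (\<lambda>f. \<Sum>x\<in>S. c x * fdelta M d z x f)"
    using assms unfolding fspan_def by auto
  show ?thesis
  proof (rule dual_boundedI)
    fix f assume f: "f \<in> lip1_ball M d z"
    have "\<bar>\<psi> f\<bar> = \<bar>\<Sum>x\<in>S. c x * f x\<bar>" using lip1_ball_lip0[OF f] by (simp add: \<psi> fdelta_def)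
    also have "\<dots> \<le> (\<Sum>x\<in>S. \<bar>c x * f x\<bar>)" by (rule sum_abs)
    also have "\<dots> \<le> (\<Sum>x\<in>S. \<bar>c x\<bar> * d x z)"
      using S lip1_ball_abs_le[OF f] by (intro sum_mono) (auto simp: abs_mult mult_left_mono)
    finally show "\<bar>\<psi> f\<bar> \<le> (\<Sum>x\<in>S. \<bar>c x\<bar> * d x z)" .
  qed
qed

lemma fspan_lincomb:
  assumes "\<psi>1 \<in> fspan M d z" "\<psi>2 \<in> fspan M d z"
  shows "(\<lambda>f. a * \<psi>1 f + b * \<psi>2 f) \<in> fspan M d z"
proof -
  obtain S1 c1 where S1: "finite S1" "S1 \<subseteq> M" "\<psi>1 = (\<lambda>f. \<Sum>x\<in>S1. c1 x * fdelta M d z x f)"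
    using assms(1) unfolding fspan_def by blast
  obtain S2 c2 where S2: "finite S2" "S2 \<subseteq> M" "\<psi>2 = (\<lambda>f. \<Sum>x\<in>S2. c2 x * fdelta M d z x f)"
    using assms(2) unfolding fspan_def by blast
  let ?c = "\<lambda>x. a * (if x \<in> S1 then c1 x else 0) + b * (if x \<in> S2 then c2 x else 0)"
  have "(\<lambda>f. a * \<psi>1 f + b * \<psi>2 f) = (\<lambda>f. \<Sum>x\<in>S1 \<union> S2. ?c x * fdelta M d z x f)"
    unfolding S1(3) S2(3) by (intro ext sum_lincomb_union[OF S1(1) S2(1), symmetric])
  moreover have "finite (S1 \<union> S2)" "S1 \<union> S2 \<subseteq> M" using S1 S2 by auto
  ultimately show ?thesis unfolding fspan_def
    by (intro CollectI exI[of _ "S1 \<union> S2"] exI[of _ ?c]) simp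
qed

lemma fspan_subset_free: "fspan M d z \<subseteq> free M d z"
proof
  fix \<psi> assume \<psi>: "\<psi> \<in> fspan M d z"
  then have "\<psi> f = 0" if "f \<notin> lip0 M d z" for f using that by (auto simp: fspan_def fdelta_def)
  moreover have "dual_bound M d z (\<lambda>f. \<psi> f - \<psi> f) e" if "0 < e" for e
    using that by (simp add: dual_bound_iff)
  ultimately show "\<psi> \<in> free M d z" using \<psi> unfolding free_def by blast
qed

lemma free_dual_bounded:
  assumes "\<phi> \<in> free M d z"
  shows "dual_bounded M d z \<phi>"
proof -
  obtain \<psi> where \<psi>: "\<psi> \<in> fspan M d z" "dual_bound M d z (\<lambda>f. \<phi> f - \<psi> f) 1"
    using assms zero_less_one unfolding free_def by blast
  have "dual_bounded M d z (\<lambda>f. \<phi> f - \<psi> f)" using \<psi>(2) by (auto simp: dual_bounded_def)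
  from dual_bounded_lincomb[OF this fspan_dual_bounded[OF \<psi>(1)], of 1 1] show ?thesis by simp
qed

lemma free_approx:
  "\<phi> \<in> free M d z \<Longrightarrow> 0 < e \<Longrightarrow> \<exists>\<psi>\<in>fspan M d z. dnorm M d z (\<lambda>f. \<phi> f - \<psi> f) \<le> e"
  unfolding free_def using dnorm_le by blast

lemma freeI:
  assumes "\<And>f. f \<notin> lip0 M d z \<Longrightarrow> \<phi> f = 0" "dual_bounded M d z \<phi>"
    and "\<And>e. 0 < e \<Longrightarrow> \<exists>\<psi>\<in>fspan M d z. dnorm M d z (\<lambda>f. \<phi> f - \<psi> f) \<le> e"
  shows "\<phi> \<in> free M d z"
  unfolding free_def
proof (intro CollectI conjI allI impI)
  fix e :: real assume "0 < e"
  then obtain \<psi> where "\<psi> \<in> fspan M d z" "dnorm M d z (\<lambda>f. \<phi> f - \<psi> f) \<le> e" using assms(3) by blast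
  then show "\<exists>\<psi>\<in>fspan M d z. dual_bound M d z (\<lambda>f. \<phi> f - \<psi> f) e"
    using dnorm_le_iff[OF dual_bounded_diff[OF assms(2) fspan_dual_bounded]] by blast
qed (use assms(1) in blast)

lemma free_lincomb:
  assumes \<phi>: "\<phi> \<in> free M d z" and \<psi>: "\<psi> \<in> free M d z"
  shows "(\<lambda>f. a * \<phi> f + b * \<psi> f) \<in> free M d z"
proof (rule freeI)
  show "a * \<phi> f + b * \<psi> f = 0" if "f \<notin> lip0 M d z" for f
    using assms that unfolding free_def by auto
  show "dual_bounded M d z (\<lambda>f. a * \<phi> f + b * \<psi> f)"
    using assms by (intro dual_bounded_lincomb free_dual_bounded)
next
  fix e :: real assume "0 < e"
  define e' where "e' = e / (\<bar>a\<bar> + \<bar>b\<bar> + 1)"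
  have "0 < e'" using \<open>0 < e\<close> by (simp add: e'_def add_pos_nonneg)
  obtain \<psi>1 where \<psi>1: "\<psi>1 \<in> fspan M d z" "dnorm M d z (\<lambda>f. \<phi> f - \<psi>1 f) \<le> e'"
    using free_approx[OF \<phi> \<open>0 < e'\<close>] by blast
  obtain \<psi>2 where \<psi>2: "\<psi>2 \<in> fspan M d z" "dnorm M d z (\<lambda>f. \<psi> f - \<psi>2 f) \<le> e'"
    using free_approx[OF \<psi> \<open>0 < e'\<close>] by blast
  have "dnorm M d z (\<lambda>f. (a * \<phi> f + b * \<psi> f) - (a * \<psi>1 f + b * \<psi>2 f))
      \<le> \<bar>a\<bar> * dnorm M d z (\<lambda>f. \<phi> f - \<psi>1 f) + \<bar>b\<bar> * dnorm M d z (\<lambda>f. \<psi> f - \<psi>2 f)"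
    using assms \<psi>1(1) \<psi>2(1)
    by (intro dnorm_lincomb_diff_le) (simp_all add: free_dual_bounded fspan_dual_bounded)
  also have "\<dots> \<le> e" using \<psi>1(2) \<psi>2(2) \<open>0 < e\<close> unfolding e'_def by (rule abs_lincomb_le_eps)
  finally have "dnorm M d z (\<lambda>f. (a * \<phi> f + b * \<psi> f) - (a * \<psi>1 f + b * \<psi>2 f)) \<le> e" .
  then show "\<exists>\<psi>'\<in>fspan M d z. dnorm M d z (\<lambda>f. (a * \<phi> f + b * \<psi> f) - \<psi>' f) \<le> e"
    using fspan_lincomb[OF \<psi>1(1) \<psi>2(1), of a b] by (intro bexI[of _ "\<lambda>f. a * \<psi>1 f + b * \<psi>2 f"])
qed

lemma free_complete:
  assumes free: "\<And>m. \<phi> m \<in> free M d z"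
    and fast: "\<And>m. dnorm M d z (\<lambda>f. \<phi> m f - \<phi> (Suc m) f) \<le> (1/2)^m"
  shows "\<exists>\<xi>\<in>free M d z. \<forall>n. dnorm M d z (\<lambda>f. \<xi> f - \<phi> n f) \<le> 2 * (1/2)^n"
proof -
  have bounded: "dual_bounded M d z (\<phi> m)" for m by (rule free_dual_bounded[OF free])
  have "\<exists>l. (\<lambda>m. \<phi> m f) \<longlonglongrightarrow> l \<and> (\<forall>n. \<bar>l - \<phi> n f\<bar> \<le> 2 * 1 * (1/2)^n)"
    if f: "f \<in> lip1_ball M d z" for f
  proof (rule geometric_Cauchy_limit)
    fix m
    show "\<bar>\<phi> m f - \<phi> (Suc m) f\<bar> \<le> 1 * (1/2)^m"
      using abs_le_dnorm[OF dual_bounded_diff[OF bounded[of m] bounded[of "Suc m"]] f] fast[of m]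
      by simp
  qed
  then have lim: "\<bar>lim (\<lambda>m. \<phi> m f) - \<phi> n f\<bar> \<le> 2 * (1/2)^n" if "f \<in> lip1_ball M d z" for f n
    using that limI by fastforce
  \<comment> \<open>Defined only on the unit ball, which is all that \<open>free\<close> and \<open>dnorm\<close> look at.\<close>
  define \<xi> where "\<xi> f = (if f \<in> lip1_ball M d z then lim (\<lambda>m. \<phi> m f) else 0)" for f
  have close: "dnorm M d z (\<lambda>f. \<xi> f - \<phi> n f) \<le> 2 * (1/2)^n" for n
    by (rule dnorm_le_ballI) (simp add: \<xi>_def lim)
  have "\<xi> \<in> free M d z"
  proof (rule freeI)
    show "\<xi> f = 0" if "f \<notin> lip0 M d z" for f using that lip1_ball_lip0 by (auto simp: \<xi>_def)
    have "dual_bounded M d z (\<lambda>f. \<xi> f - \<phi> 0 f)"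
      using lim[of _ 0] by (intro dual_boundedI[of _ 2]) (simp add: \<xi>_def)
    from dual_bounded_lincomb[OF this bounded[of 0], of 1 1] show "dual_bounded M d z \<xi>" by simp
    fix e :: real assume "0 < e"
    then obtain n where n: "(1/2::real)^n < e / 4" using real_arch_pow_inv[of "e/4" "1/2"] by auto
    obtain \<psi> where \<psi>: "\<psi> \<in> fspan M d z" "dnorm M d z (\<lambda>f. \<phi> n f - \<psi> f) \<le> e / 2"
      using free_approx[OF free[of n], of "e/2"] \<open>0 < e\<close> by auto
    have "dnorm M d z (\<lambda>f. \<xi> f - \<psi> f) \<le> dnorm M d z (\<lambda>f. \<xi> f - \<phi> n f) + dnorm M d z (\<lambda>f. \<phi> n f - \<psi> f)"
      using \<open>dual_bounded M d z \<xi>\<close> bounded fspan_dual_bounded[OF \<psi>(1)] by (rule dnorm_triangle)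
    also have "\<dots> \<le> e" using close[of n] \<psi>(2) n by linarith
    finally show "\<exists>\<psi>\<in>fspan M d z. dnorm M d z (\<lambda>f. \<xi> f - \<psi> f) \<le> e" using \<psi>(1) by blast
  qed
  with close show ?thesis by blast
qed

lemma free_complete_truncated:
  assumes free: "\<And>m. \<phi> m \<in> free M d z"
  shows "\<exists>\<xi>\<in>free M d z. \<forall>n. (\<forall>k<n. dnorm M d z (\<lambda>f. \<phi> k f - \<phi> (Suc k) f) \<le> (1/2)^k) \<longrightarrow>
    dnorm M d z (\<lambda>f. \<xi> f - \<phi> n f) \<le> 2 * (1/2)^n"
proof -
  \<comment> \<open>Freezing the sequence from the first index where the estimate fails makes it fast Cauchy,
    without changing the terms before that index.\<close>
  define good where "good k \<longleftrightarrow> dnorm M d z (\<lambda>f. \<phi> k f - \<phi> (Suc k) f) \<le> (1/2)^k" for k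
  define t where "t m = (LEAST k. k = m \<or> \<not> good k)" for m
  have "dnorm M d z (\<lambda>f. \<phi> (t m) f - \<phi> (t (Suc m)) f) \<le> (1/2)^m" for m
  proof (cases "t (Suc m) = t m")
    case True
    then show ?thesis by (simp add: dnorm_zero)
  next
    case False
    then show ?thesis using Least_first_failure_Suc[of m good] by (simp add: t_def good_def)
  qed
  then obtain \<xi> where \<xi>: "\<xi> \<in> free M d z"
    and close: "\<And>n. dnorm M d z (\<lambda>f. \<xi> f - \<phi> (t n) f) \<le> 2 * (1/2)^n"
    using free_complete[of "\<lambda>m. \<phi> (t m)"] free by blast
  show ?thesis
  proof (intro bexI[of _ \<xi>] allI impI \<xi>)
    fix n assume "\<forall>k<n. dnorm M d z (\<lambda>f. \<phi> k f - \<phi> (Suc k) f) \<le> (1/2)^k"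
    then have "t n = n" unfolding t_def by (intro Least_first_failure) (simp add: good_def)
    then show "dnorm M d z (\<lambda>f. \<xi> f - \<phi> n f) \<le> 2 * (1/2)^n" using close[of n] by simp
  qed
qed

end

section \<open>The metric ultraproduct\<close>

lemma mcshane_extension:
  assumes metric: "Metric_space M d" and P: "finite P" "P \<noteq> {}" and pt: "\<And>p. p \<in> P \<Longrightarrow> pt p \<in> M"
    and lip: "\<And>p q. p \<in> P \<Longrightarrow> q \<in> P \<Longrightarrow> \<bar>a p - a q\<bar> \<le> d (pt p) (pt q)"
  shows "\<exists>h. (\<forall>p\<in>P. h (pt p) = a p) \<and> (\<forall>x\<in>M. \<forall>y\<in>M. \<bar>h x - h y\<bar> \<le> d x y) \<and> (\<forall>x. x \<notin> M \<longrightarrow> h x = 0)"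
proof -
  define m where "m y = Min ((\<lambda>q. a q + d y (pt q)) ` P)" for y
  have m_le: "m y \<le> a q + d y (pt q)" if "q \<in> P" for y q
    unfolding m_def using P that by (intro Min_le) auto
  have m_attained: "\<exists>q\<in>P. m y = a q + d y (pt q)" for y
  proof -
    have "m y \<in> (\<lambda>q. a q + d y (pt q)) ` P" unfolding m_def using P by (intro Min_in) auto
    then show ?thesis by blast
  qed
  have m_pt: "m (pt p) = a p" if p: "p \<in> P" for p
  proof (rule antisym)
    show "m (pt p) \<le> a p" using m_le[OF p, of "pt p"] Metric_space.mdist_zero[OF metric pt[OF p]] by simp
    obtain q where "q \<in> P" "m (pt p) = a q + d (pt p) (pt q)" using m_attained by blast
    then show "a p \<le> m (pt p)" using lip[OF p] by force
  qed
  have m_lip: "m x \<le> m y + d x y" if "x \<in> M" "y \<in> M" for x y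
  proof -
    obtain q where q: "q \<in> P" "m y = a q + d y (pt q)" using m_attained by blast
    have "d x (pt q) \<le> d x y + d y (pt q)" using Metric_space.triangle[OF metric] that pt q(1) by blast
    then show ?thesis using m_le[OF q(1), of x] q(2) by linarith
  qed
  have "\<bar>m x - m y\<bar> \<le> d x y" if "x \<in> M" "y \<in> M" for x y
    using m_lip[OF that] m_lip[OF that(2,1)] Metric_space.commute[OF metric, of x y] by linarith
  then show ?thesis using m_pt pt
    by (intro exI[of _ "\<lambda>y. if y \<in> M then m y else 0"]) auto
qed

locale metric_ultraproduct =
  fixes U :: "'i filter" and M :: "'i \<Rightarrow> 'a set" and d :: "'i \<Rightarrow> 'a \<Rightarrow> 'a \<Rightarrow> real"
    and z :: "'i \<Rightarrow> 'a"
  assumes ultrafilter: "is_ultrafilter U"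
    and metric: "\<And>i. Metric_space (M i) (d i)"
    and base_in: "\<And>i. z i \<in> M i"
begin

sublocale coord: pointed_dist "M i" "d i" "z i" for i
  using base_in Metric_space.nonneg[OF metric] by unfold_locales auto

abbreviation "M\<^sub>U \<equiv> uprod U M d z"
abbreviation "d\<^sub>U \<equiv> uprod_dist U d"
abbreviation "z\<^sub>U \<equiv> uprod_base U M d z"
abbreviation "cls \<equiv> upclass U M d z"

text \<open>The representative on which \<^const>\<open>uprod_dist\<close> evaluates a class.\<close>

definition rep :: "('i \<Rightarrow> 'a) set \<Rightarrow> 'i \<Rightarrow> 'a" where
  "rep A = (SOME x. x \<in> A)"

lemma U_proper: "U \<noteq> bot"
  using ultrafilter by (simp add: is_ultrafilter_def)

lemma linfM_in: "x \<in> linfM M d z \<Longrightarrow> x i \<in> M i"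
  by (simp add: linfM_def)

lemma base_in_linfM: "z \<in> linfM M d z"
  using base_in Metric_space.mdist_zero[OF metric] by (auto simp: linfM_def)

lemma linfM_dist_bounded:
  assumes "x \<in> linfM M d z" "y \<in> linfM M d z"
  shows "\<exists>B. \<forall>i. \<bar>d i (x i) (y i)\<bar> \<le> B"
proof -
  obtain Bx By where "\<forall>i. d i (x i) (z i) \<le> Bx" "\<forall>i. d i (y i) (z i) \<le> By"
    using assms unfolding linfM_def by blast
  moreover have "d i (x i) (y i) \<le> d i (x i) (z i) + d i (z i) (y i)" for i
    using Metric_space.triangle[OF metric] linfM_in assms base_in by blast
  ultimately have "\<bar>d i (x i) (y i)\<bar> \<le> Bx + By" for i
    using Metric_space.nonneg[OF metric, of i "x i" "y i"] Metric_space.commute[OF metric, of i "z i" "y i"]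
    by (smt (verit))
  then show ?thesis by blast
qed

lemma updist_tendsto:
  assumes "x \<in> linfM M d z" "y \<in> linfM M d z"
  shows "((\<lambda>i. d i (x i) (y i)) \<longlongrightarrow> updist U d x y) U"
proof -
  obtain B where "\<forall>i. \<bar>d i (x i) (y i)\<bar> \<le> B" using linfM_dist_bounded[OF assms] by blast
  then show ?thesis unfolding updist_def by (rule ultrafilter_tendsto_Lim[OF ultrafilter])
qed

lemma updist_nonneg: "x \<in> linfM M d z \<Longrightarrow> y \<in> linfM M d z \<Longrightarrow> 0 \<le> updist U d x y"
  by (rule tendsto_lowerbound[OF updist_tendsto])
    (auto simp: Metric_space.nonneg[OF metric] U_proper)

lemma updist_commute: "updist U d x y = updist U d y x"
  unfolding updist_def by (simp add: Metric_space.commute[OF metric])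

lemma updist_self: "x \<in> linfM M d z \<Longrightarrow> updist U d x x = 0"
  using tendsto_unique[OF U_proper updist_tendsto[of x x]]
  by (simp add: Metric_space.mdist_zero[OF metric] linfM_in)

lemma updist_triangle:
  assumes "x \<in> linfM M d z" "y \<in> linfM M d z" "w \<in> linfM M d z"
  shows "updist U d x w \<le> updist U d x y + updist U d y w"
proof (rule tendsto_le[OF U_proper])
  show "((\<lambda>i. d i (x i) (y i) + d i (y i) (w i)) \<longlongrightarrow> updist U d x y + updist U d y w) U"
    using assms by (intro tendsto_add updist_tendsto)
  show "((\<lambda>i. d i (x i) (w i)) \<longlongrightarrow> updist U d x w) U" by (rule updist_tendsto[OF assms(1,3)])
  show "eventually (\<lambda>i. d i (x i) (w i) \<le> d i (x i) (y i) + d i (y i) (w i)) U"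
    using Metric_space.triangle[OF metric] linfM_in assms by (intro always_eventually) blast
qed

lemma updist_cong:
  assumes "x \<in> linfM M d z" "x' \<in> linfM M d z" "y \<in> linfM M d z" "y' \<in> linfM M d z"
    and "updist U d x x' = 0" "updist U d y y' = 0"
  shows "updist U d x' y' = updist U d x y"
  using updist_triangle[OF assms(2,1,4)] updist_triangle[OF assms(1,3,4)]
    updist_triangle[OF assms(1,2,3)] updist_triangle[OF assms(2,4,3)]
    updist_commute[of x x'] updist_commute[of y y'] assms(5,6)
  by linarith

lemma cls_eqI:
  assumes "x \<in> linfM M d z" "y \<in> linfM M d z" "updist U d x y = 0"
  shows "cls x = cls y"
proof -
  have "updist U d x w = updist U d y w" if "w \<in> linfM M d z" for w
    using updist_cong[OF assms(1,2) that that assms(3) updist_self[OF that]] by simp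
  then show ?thesis unfolding upclass_def by auto
qed

lemma rep_cls:
  assumes "x \<in> linfM M d z"
  shows "rep (cls x) \<in> linfM M d z" "updist U d x (rep (cls x)) = 0"
proof -
  have "rep (cls x) \<in> cls x"
    unfolding rep_def by (rule someI[of _ x]) (simp add: upclass_def assms updist_self)
  then show "rep (cls x) \<in> linfM M d z" "updist U d x (rep (cls x)) = 0"
    by (simp_all add: upclass_def)
qed

lemma cls_in_uprod: "x \<in> linfM M d z \<Longrightarrow> cls x \<in> M\<^sub>U"
  by (simp add: uprod_def)

lemma uprod_rep:
  assumes "A \<in> M\<^sub>U"
  shows "rep A \<in> linfM M d z \<and> cls (rep A) = A"
proof -
  obtain x where x: "x \<in> linfM M d z" "A = cls x" using assms unfolding uprod_def by blast
  show ?thesis using rep_cls[OF x(1)] cls_eqI[OF x(1) rep_cls[OF x(1)], symmetric] x(2) by simp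
qed

lemma uprod_dist_rep: "d\<^sub>U A B = updist U d (rep A) (rep B)"
  by (simp add: uprod_dist_def rep_def)

lemma uprod_dist_cls:
  assumes "x \<in> linfM M d z" "y \<in> linfM M d z"
  shows "d\<^sub>U (cls x) (cls y) = updist U d x y"
  unfolding uprod_dist_rep using rep_cls[OF assms(1)] rep_cls[OF assms(2)]
  by (intro updist_cong[OF assms(1) _ assms(2)])

lemma uprod_base_cls: "z\<^sub>U = cls z"
  by (simp add: uprod_base_def)

sublocale ultra: pointed_dist "M\<^sub>U" "d\<^sub>U" "z\<^sub>U"
proof
  show "0 \<le> d\<^sub>U A B" if "A \<in> M\<^sub>U" "B \<in> M\<^sub>U" for A B
    unfolding uprod_dist_rep using uprod_rep[OF that(1)] uprod_rep[OF that(2)]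
    by (blast intro: updist_nonneg)
  show "z\<^sub>U \<in> M\<^sub>U" by (simp add: uprod_base_cls cls_in_uprod base_in_linfM)
qed

lemma lip1_ball_uprod_cls:
  assumes "g \<in> lip1_ball M\<^sub>U d\<^sub>U z\<^sub>U" "x \<in> linfM M d z" "y \<in> linfM M d z"
  shows "\<bar>g (cls x) - g (cls y)\<bar> \<le> updist U d x y"
proof -
  have "\<bar>g (cls x) - g (cls y)\<bar> \<le> d\<^sub>U (cls x) (cls y)"
    using assms(1) cls_in_uprod[OF assms(2)] cls_in_uprod[OF assms(3)] unfolding lip1_ball_def by blast
  then show ?thesis using uprod_dist_cls[OF assms(2,3)] by simp
qed

text \<open>The factor \<open>t < 1\<close> absorbs, for \<open>U\<close>-almost every \<open>i\<close>, the gap between \<open>d\<^sub>U\<close> and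
  \<open>d i\<close> on the finitely many pairs of points.\<close>

lemma eventually_lip1_interpolant:
  assumes g: "g \<in> lip1_ball M\<^sub>U d\<^sub>U z\<^sub>U" and S: "finite S" "S \<subseteq> linfM M d z"
    and t: "0 < t" "t < 1"
  shows "eventually (\<lambda>i. \<exists>h\<in>lip1_ball (M i) (d i) (z i). \<forall>x\<in>S. h (x i) = t * g (cls x)) U"
proof -
  let ?P = "insert z S" and ?a = "\<lambda>p. t * g (cls p)"
  have P: "finite ?P" "?P \<subseteq> linfM M d z" using S base_in_linfM by auto
  have close: "eventually (\<lambda>i. \<bar>?a p - ?a q\<bar> \<le> d i (p i) (q i)) U"
    if "p \<in> linfM M d z" "q \<in> linfM M d z" for p q
  proof (cases "updist U d p q = 0")
    case True
    then have "\<bar>?a p - ?a q\<bar> = 0" using lip1_ball_uprod_cls[OF g that] by simp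
    then show ?thesis
      by (intro always_eventually allI) (simp only: Metric_space.nonneg[OF metric])
  next
    case False
    then have "t * updist U d p q < updist U d p q" using t updist_nonneg[OF that] by simp
    then have "eventually (\<lambda>i. t * updist U d p q < d i (p i) (q i)) U"
      by (rule order_tendstoD(1)[OF updist_tendsto[OF that]])
    moreover have "\<bar>?a p - ?a q\<bar> \<le> t * updist U d p q"
      using lip1_ball_uprod_cls[OF g that] t by (simp add: abs_mult flip: right_diff_distrib)
    ultimately show ?thesis by (elim eventually_mono) linarith
  qed
  have "eventually (\<lambda>i. \<forall>p\<in>?P. \<forall>q\<in>?P. \<bar>?a p - ?a q\<bar> \<le> d i (p i) (q i)) U"
  proof (intro eventually_ball_finite[OF P(1)] ballI)
    fix p q assume "p \<in> ?P" "q \<in> ?P"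
    then show "eventually (\<lambda>i. \<bar>?a p - ?a q\<bar> \<le> d i (p i) (q i)) U" using P(2) close by blast
  qed
  then show ?thesis
  proof (rule eventually_mono)
    fix i assume lip: "\<forall>p\<in>?P. \<forall>q\<in>?P. \<bar>?a p - ?a q\<bar> \<le> d i (p i) (q i)"
    have "\<exists>h. (\<forall>p\<in>?P. h (p i) = ?a p) \<and> (\<forall>x\<in>M i. \<forall>y\<in>M i. \<bar>h x - h y\<bar> \<le> d i x y)
        \<and> (\<forall>x. x \<notin> M i \<longrightarrow> h x = 0)"
      by (rule mcshane_extension[OF metric P(1)]) (use P(2) linfM_in lip in auto)
    then obtain h where h: "\<forall>p\<in>?P. h (p i) = ?a p" "\<forall>x\<in>M i. \<forall>y\<in>M i. \<bar>h x - h y\<bar> \<le> d i x y"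
      "\<forall>x. x \<notin> M i \<longrightarrow> h x = 0"
      by blast
    have "g (cls z) = 0" using g by (simp add: lip1_ball_def flip: uprod_base_cls)
    then have "h (z i) = 0" using h(1) by simp
    then have "h \<in> lip1_ball (M i) (d i) (z i)" using h(2,3) by (simp add: lip1_ball_def)
    then show "\<exists>h\<in>lip1_ball (M i) (d i) (z i). \<forall>x\<in>S. h (x i) = t * g (cls x)" using h(1) by blast
  qed
qed

lemma lip1_family_tendsto_rep:
  assumes F: "\<And>i. F i \<in> lip1_ball (M i) (d i) (z i)" and x: "x \<in> linfM M d z"
  shows "((\<lambda>i. F i (x i)) \<longlongrightarrow> Lim U (\<lambda>i. F i (rep (cls x) i))) U"
proof -
  let ?r = "rep (cls x)"
  have r: "?r \<in> linfM M d z" "updist U d x ?r = 0" by (rule rep_cls[OF x])+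
  obtain B where "\<forall>i. \<bar>d i (?r i) (z i)\<bar> \<le> B" using linfM_dist_bounded[OF r(1) base_in_linfM] by blast
  then have "\<forall>i. \<bar>F i (?r i)\<bar> \<le> B"
    using coord.lip1_ball_abs_le[OF F linfM_in[OF r(1)]] by (meson abs_ge_self order_trans)
  then have "((\<lambda>i. F i (?r i)) \<longlongrightarrow> Lim U (\<lambda>i. F i (?r i))) U"
    by (rule ultrafilter_tendsto_Lim[OF ultrafilter])
  moreover have "((\<lambda>i. F i (x i) - F i (?r i)) \<longlongrightarrow> 0) U"
  proof (rule Lim_null_comparison)
    show "eventually (\<lambda>i. norm (F i (x i) - F i (?r i)) \<le> d i (x i) (?r i)) U"
      using F linfM_in[OF x] linfM_in[OF r(1)] by (simp add: always_eventually lip1_ball_def)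
    show "((\<lambda>i. d i (x i) (?r i)) \<longlongrightarrow> 0) U" using updist_tendsto[OF x r(1)] r(2) by simp
  qed
  ultimately have "((\<lambda>i. (F i (x i) - F i (?r i)) + F i (?r i)) \<longlongrightarrow> 0 + Lim U (\<lambda>i. F i (?r i))) U"
    by (intro tendsto_add)
  then show ?thesis by simp
qed

lemma ultralimit_lip1:
  assumes F: "\<And>i. F i \<in> lip1_ball (M i) (d i) (z i)"
  shows "\<exists>g\<in>lip1_ball M\<^sub>U d\<^sub>U z\<^sub>U. \<forall>x\<in>linfM M d z. ((\<lambda>i. F i (x i)) \<longlongrightarrow> g (cls x)) U"
proof -
  define g where "g A = (if A \<in> M\<^sub>U then Lim U (\<lambda>i. F i (rep A i)) else 0)" for A
  have g_cls: "((\<lambda>i. F i (x i)) \<longlongrightarrow> g (cls x)) U" if "x \<in> linfM M d z" for x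
    using lip1_family_tendsto_rep[OF F that] cls_in_uprod[OF that] by (simp add: g_def)
  have "g z\<^sub>U = 0"
  proof -
    have "F i (z i) = 0" for i using F[of i] by (simp add: lip1_ball_def)
    then show ?thesis
      using tendsto_unique[OF U_proper g_cls[OF base_in_linfM]] uprod_base_cls by simp
  qed
  moreover have "\<bar>g A - g B\<bar> \<le> d\<^sub>U A B" if AB: "A \<in> M\<^sub>U" "B \<in> M\<^sub>U" for A B
  proof -
    obtain x y where x: "x \<in> linfM M d z" "A = cls x" and y: "y \<in> linfM M d z" "B = cls y"
      using AB unfolding uprod_def by blast
    have "((\<lambda>i. \<bar>F i (x i) - F i (y i)\<bar>) \<longlongrightarrow> \<bar>g A - g B\<bar>) U"
      using g_cls x y by (intro tendsto_intros) auto
    moreover have "eventually (\<lambda>i. \<bar>F i (x i) - F i (y i)\<bar> \<le> d i (x i) (y i)) U"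
      using F linfM_in[OF x(1)] linfM_in[OF y(1)] by (simp add: always_eventually lip1_ball_def)
    ultimately have "\<bar>g A - g B\<bar> \<le> updist U d x y"
      by (rule tendsto_le[OF U_proper updist_tendsto[OF x(1) y(1)]])
    then show ?thesis using uprod_dist_cls x y by simp
  qed
  ultimately have "g \<in> lip1_ball M\<^sub>U d\<^sub>U z\<^sub>U" by (simp add: lip1_ball_def g_def)
  with g_cls show ?thesis by blast
qed

section \<open>Finite combinations of evaluations\<close>

definition udelta_comb :: "('i \<Rightarrow> 'a) set \<Rightarrow> (('i \<Rightarrow> 'a) \<Rightarrow> real) \<Rightarrow> 'i \<Rightarrow> ('a \<Rightarrow> real) \<Rightarrow> real" where
  "udelta_comb S c = (\<lambda>i f. \<Sum>x\<in>S. c x * udelta M d z x i f)"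

definition uprod_delta_comb ::
    "('i \<Rightarrow> 'a) set \<Rightarrow> (('i \<Rightarrow> 'a) \<Rightarrow> real) \<Rightarrow> (('i \<Rightarrow> 'a) set \<Rightarrow> real) \<Rightarrow> real" where
  "uprod_delta_comb S c = (\<lambda>g. \<Sum>x\<in>S. c x * fdelta M\<^sub>U d\<^sub>U z\<^sub>U (cls x) g)"

lemma udelta_comb_apply:
  "f \<in> lip1_ball (M i) (d i) (z i) \<Longrightarrow> udelta_comb S c i f = (\<Sum>x\<in>S. c x * f (x i))"
  using coord.lip1_ball_lip0 by (simp add: udelta_comb_def udelta_def fdelta_def)

lemma uprod_delta_comb_apply:
  "g \<in> lip1_ball M\<^sub>U d\<^sub>U z\<^sub>U \<Longrightarrow> uprod_delta_comb S c g = (\<Sum>x\<in>S. c x * g (cls x))"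
  using ultra.lip1_ball_lip0 by (simp add: uprod_delta_comb_def fdelta_def)

lemma udelta_comb_in_fspan:
  "finite S \<Longrightarrow> S \<subseteq> linfM M d z \<Longrightarrow> udelta_comb S c i \<in> fspan (M i) (d i) (z i)"
  unfolding udelta_comb_def udelta_def by (rule coord.sum_fdelta_in_fspan) (auto simp: linfM_in)

lemma uprod_delta_comb_in_fspan:
  "finite S \<Longrightarrow> S \<subseteq> linfM M d z \<Longrightarrow> uprod_delta_comb S c \<in> fspan M\<^sub>U d\<^sub>U z\<^sub>U"
  unfolding uprod_delta_comb_def by (rule ultra.sum_fdelta_in_fspan) (auto simp: cls_in_uprod)

lemma fspan_uprod_delta_comb:
  assumes "\<psi> \<in> fspan M\<^sub>U d\<^sub>U z\<^sub>U"
  shows "\<exists>S c. finite S \<and> S \<subseteq> linfM M d z \<and> \<psi> = uprod_delta_comb S c"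
proof -
  obtain T c where T: "finite T" "T \<subseteq> M\<^sub>U" and \<psi>: "\<psi> = (\<lambda>g. \<Sum>A\<in>T. c A * fdelta M\<^sub>U d\<^sub>U z\<^sub>U A g)"
    using assms unfolding fspan_def by blast
  have rep_T: "rep A \<in> linfM M d z" "cls (rep A) = A" if "A \<in> T" for A
    using uprod_rep T(2) that by auto
  then have "inj_on rep T" by (metis inj_onI)
  then have "uprod_delta_comb (rep ` T) (\<lambda>x. c (cls x)) = \<psi>"
    unfolding uprod_delta_comb_def \<psi> by (simp add: sum.reindex rep_T)
  moreover have "rep ` T \<subseteq> linfM M d z" using rep_T by blast
  ultimately show ?thesis using T(1) by blast
qed

lemma comb_lincomb:
  assumes "finite S1" "S1 \<subseteq> linfM M d z" "finite S2" "S2 \<subseteq> linfM M d z"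
  obtains S c where "finite S" "S \<subseteq> linfM M d z"
    "udelta_comb S c = (\<lambda>i f. a * udelta_comb S1 c1 i f + b * udelta_comb S2 c2 i f)"
    "uprod_delta_comb S c = (\<lambda>g. a * uprod_delta_comb S1 c1 g + b * uprod_delta_comb S2 c2 g)"
proof -
  let ?c = "\<lambda>x. a * (if x \<in> S1 then c1 x else 0) + b * (if x \<in> S2 then c2 x else 0)"
  have "udelta_comb (S1 \<union> S2) ?c = (\<lambda>i f. a * udelta_comb S1 c1 i f + b * udelta_comb S2 c2 i f)"
    unfolding udelta_comb_def by (intro ext sum_lincomb_union assms(1,3))
  moreover have "uprod_delta_comb (S1 \<union> S2) ?c
      = (\<lambda>g. a * uprod_delta_comb S1 c1 g + b * uprod_delta_comb S2 c2 g)"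
    unfolding uprod_delta_comb_def by (intro ext sum_lincomb_union assms(1,3))
  ultimately show thesis using assms by (intro that[of "S1 \<union> S2" ?c]) auto
qed

lemma linfF_free: "\<Phi> \<in> linfF M d z \<Longrightarrow> \<Phi> i \<in> free (M i) (d i) (z i)"
  by (simp add: linfF_def)

lemma linfF_dual_bounded: "\<Phi> \<in> linfF M d z \<Longrightarrow> dual_bounded (M i) (d i) (z i) (\<Phi> i)"
  by (rule coord.free_dual_bounded[OF linfF_free])

lemma linfF_lincomb:
  assumes "\<Phi> \<in> linfF M d z" "\<Psi> \<in> linfF M d z"
  shows "(\<lambda>i f. a * \<Phi> i f + b * \<Psi> i f) \<in> linfF M d z"
proof -
  obtain B1 B2 where B: "\<forall>i. dnorm (M i) (d i) (z i) (\<Phi> i) \<le> B1" "\<forall>i. dnorm (M i) (d i) (z i) (\<Psi> i) \<le> B2"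
    using assms unfolding linfF_def by blast
  have "dnorm (M i) (d i) (z i) (\<lambda>f. a * \<Phi> i f + b * \<Psi> i f) \<le> \<bar>a\<bar> * B1 + \<bar>b\<bar> * B2" for i
    using coord.dnorm_lincomb_le[OF linfF_dual_bounded[OF assms(1)] linfF_dual_bounded[OF assms(2)], of i a b]
      B[THEN spec, of i] by (smt (verit) abs_ge_zero mult_left_mono)
  moreover have "(\<lambda>f. a * \<Phi> i f + b * \<Psi> i f) \<in> free (M i) (d i) (z i)" for i
    using assms by (intro coord.free_lincomb linfF_free)
  ultimately show ?thesis unfolding linfF_def by blast
qed

lemma linfF_diff: "\<Phi> \<in> linfF M d z \<Longrightarrow> \<Psi> \<in> linfF M d z \<Longrightarrow> (\<lambda>i f. \<Phi> i f - \<Psi> i f) \<in> linfF M d z"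
  using linfF_lincomb[of \<Phi> \<Psi> 1 "-1"] by simp

lemma udelta_comb_in_linfF:
  assumes S: "finite S" "S \<subseteq> linfM M d z"
  shows "udelta_comb S c \<in> linfF M d z"
proof -
  have "\<forall>x\<in>S. \<exists>B. \<forall>i. d i (x i) (z i) \<le> B" using S unfolding linfM_def by blast
  then obtain B where B: "\<And>x i. x \<in> S \<Longrightarrow> d i (x i) (z i) \<le> B x" by metis
  have "dnorm (M i) (d i) (z i) (udelta_comb S c i) \<le> (\<Sum>x\<in>S. \<bar>c x\<bar> * B x)" for i
  proof (rule coord.dnorm_le_ballI)
    fix f assume f: "f \<in> lip1_ball (M i) (d i) (z i)"
    have "\<bar>udelta_comb S c i f\<bar> \<le> (\<Sum>x\<in>S. \<bar>c x * f (x i)\<bar>)"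
      unfolding udelta_comb_apply[OF f] by (rule sum_abs)
    also have "\<dots> \<le> (\<Sum>x\<in>S. \<bar>c x\<bar> * B x)"
    proof (rule sum_mono)
      fix x assume "x \<in> S"
      then have "\<bar>f (x i)\<bar> \<le> B x"
        using coord.lip1_ball_abs_le[OF f linfM_in] B S(2) by (meson order_trans subsetD)
      then show "\<bar>c x * f (x i)\<bar> \<le> \<bar>c x\<bar> * B x" by (simp add: abs_mult mult_left_mono)
    qed
    finally show "\<bar>udelta_comb S c i f\<bar> \<le> (\<Sum>x\<in>S. \<bar>c x\<bar> * B x)" .
  qed
  moreover have "udelta_comb S c i \<in> free (M i) (d i) (z i)" for i
    using coord.fspan_subset_free udelta_comb_in_fspan[OF S] by blast
  ultimately show ?thesis unfolding linfF_def by blast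
qed

lemma unorm_tendsto:
  assumes "\<Phi> \<in> linfF M d z"
  shows "((\<lambda>i. dnorm (M i) (d i) (z i) (\<Phi> i)) \<longlongrightarrow> unorm U M d z \<Phi>) U"
proof -
  obtain B where "\<forall>i. dnorm (M i) (d i) (z i) (\<Phi> i) \<le> B" using assms unfolding linfF_def by blast
  then have "\<forall>i. \<bar>dnorm (M i) (d i) (z i) (\<Phi> i)\<bar> \<le> B"
    using coord.dnorm_nonneg[OF linfF_dual_bounded[OF assms]] by simp
  then show ?thesis unfolding unorm_def by (rule ultrafilter_tendsto_Lim[OF ultrafilter])
qed

lemma unorm_le_eventually:
  "\<Phi> \<in> linfF M d z \<Longrightarrow> eventually (\<lambda>i. dnorm (M i) (d i) (z i) (\<Phi> i) \<le> e) U \<Longrightarrow> unorm U M d z \<Phi> \<le> e"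
  by (rule tendsto_upperbound[OF unorm_tendsto _ U_proper])

lemma eventually_dnorm_less:
  "\<Phi> \<in> linfF M d z \<Longrightarrow> unorm U M d z \<Phi> < e \<Longrightarrow> eventually (\<lambda>i. dnorm (M i) (d i) (z i) (\<Phi> i) < e) U"
  by (rule order_tendstoD(2)[OF unorm_tendsto])

lemma unorm_lincomb_le:
  assumes "\<Phi> \<in> linfF M d z" "\<Psi> \<in> linfF M d z"
  shows "unorm U M d z (\<lambda>i f. a * \<Phi> i f + b * \<Psi> i f) \<le> \<bar>a\<bar> * unorm U M d z \<Phi> + \<bar>b\<bar> * unorm U M d z \<Psi>"
proof (rule tendsto_le[OF U_proper])
  show "((\<lambda>i. \<bar>a\<bar> * dnorm (M i) (d i) (z i) (\<Phi> i) + \<bar>b\<bar> * dnorm (M i) (d i) (z i) (\<Psi> i))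
      \<longlongrightarrow> \<bar>a\<bar> * unorm U M d z \<Phi> + \<bar>b\<bar> * unorm U M d z \<Psi>) U"
    using assms by (intro tendsto_add tendsto_mult_left unorm_tendsto)
  show "((\<lambda>i. dnorm (M i) (d i) (z i) (\<lambda>f. a * \<Phi> i f + b * \<Psi> i f))
      \<longlongrightarrow> unorm U M d z (\<lambda>i f. a * \<Phi> i f + b * \<Psi> i f)) U"
    using unorm_tendsto[OF linfF_lincomb[OF assms]] by simp
  show "eventually (\<lambda>i. dnorm (M i) (d i) (z i) (\<lambda>f. a * \<Phi> i f + b * \<Psi> i f)
      \<le> \<bar>a\<bar> * dnorm (M i) (d i) (z i) (\<Phi> i) + \<bar>b\<bar> * dnorm (M i) (d i) (z i) (\<Psi> i)) U"
    using assms by (simp add: always_eventually coord.dnorm_lincomb_le linfF_dual_bounded)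
qed

lemma unorm_lincomb_diff_le:
  assumes "\<Phi> \<in> linfF M d z" "\<Phi>' \<in> linfF M d z" "\<Psi> \<in> linfF M d z" "\<Psi>' \<in> linfF M d z"
  shows "unorm U M d z (\<lambda>i f. (a * \<Phi> i f + b * \<Psi> i f) - (a * \<Phi>' i f + b * \<Psi>' i f))
    \<le> \<bar>a\<bar> * unorm U M d z (\<lambda>i f. \<Phi> i f - \<Phi>' i f) + \<bar>b\<bar> * unorm U M d z (\<lambda>i f. \<Psi> i f - \<Psi>' i f)"
proof -
  have "(\<lambda>i f. (a * \<Phi> i f + b * \<Psi> i f) - (a * \<Phi>' i f + b * \<Psi>' i f))
      = (\<lambda>i f. a * (\<Phi> i f - \<Phi>' i f) + b * (\<Psi> i f - \<Psi>' i f))"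
    by (simp add: algebra_simps)
  then show ?thesis
    using unorm_lincomb_le[OF linfF_diff[OF assms(1,2)] linfF_diff[OF assms(3,4)]] by simp
qed

lemma unorm_triangle:
  assumes "\<Phi> \<in> linfF M d z" "\<Psi> \<in> linfF M d z" "\<Theta> \<in> linfF M d z"
  shows "unorm U M d z (\<lambda>i f. \<Phi> i f - \<Theta> i f)
    \<le> unorm U M d z (\<lambda>i f. \<Phi> i f - \<Psi> i f) + unorm U M d z (\<lambda>i f. \<Psi> i f - \<Theta> i f)"
proof -
  have "(\<lambda>i f. \<Phi> i f - \<Theta> i f) = (\<lambda>i f. 1 * (\<Phi> i f - \<Psi> i f) + 1 * (\<Psi> i f - \<Theta> i f))" by simp
  then show ?thesis using unorm_lincomb_le[OF linfF_diff linfF_diff, of \<Phi> \<Psi> \<Psi> \<Theta> 1 1] assms by simp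
qed

lemma unorm_commute: "unorm U M d z (\<lambda>i f. \<Phi> i f - \<Psi> i f) = unorm U M d z (\<lambda>i f. \<Psi> i f - \<Phi> i f)"
proof -
  have "(\<lambda>i. dnorm (M i) (d i) (z i) (\<lambda>f. \<Phi> i f - \<Psi> i f))
      = (\<lambda>i. dnorm (M i) (d i) (z i) (\<lambda>f. \<Psi> i f - \<Phi> i f))"
    using coord.dnorm_commute by blast
  then show ?thesis unfolding unorm_def by simp
qed

lemma unorm_reverse_triangle:
  assumes "\<Phi> \<in> linfF M d z" "\<Psi> \<in> linfF M d z"
  shows "\<bar>unorm U M d z \<Phi> - unorm U M d z \<Psi>\<bar> \<le> unorm U M d z (\<lambda>i f. \<Phi> i f - \<Psi> i f)"
proof (rule tendsto_le[OF U_proper])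
  show "((\<lambda>i. \<bar>dnorm (M i) (d i) (z i) (\<Phi> i) - dnorm (M i) (d i) (z i) (\<Psi> i)\<bar>)
      \<longlongrightarrow> \<bar>unorm U M d z \<Phi> - unorm U M d z \<Psi>\<bar>) U"
    using assms by (intro tendsto_intros unorm_tendsto)
  show "((\<lambda>i. dnorm (M i) (d i) (z i) (\<lambda>f. \<Phi> i f - \<Psi> i f))
      \<longlongrightarrow> unorm U M d z (\<lambda>i f. \<Phi> i f - \<Psi> i f)) U"
    using unorm_tendsto[OF linfF_diff[OF assms]] by simp
  show "eventually (\<lambda>i. \<bar>dnorm (M i) (d i) (z i) (\<Phi> i) - dnorm (M i) (d i) (z i) (\<Psi> i)\<bar>
      \<le> dnorm (M i) (d i) (z i) (\<lambda>f. \<Phi> i f - \<Psi> i f)) U"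
    using assms by (simp add: always_eventually coord.dnorm_reverse_triangle linfF_dual_bounded)
qed

lemma unorm_zero: "unorm U M d z (\<lambda>i f. 0) = 0"
  unfolding unorm_def coord.dnorm_zero by (rule tendsto_Lim[OF U_proper tendsto_const])

lemma dnorm_uprod_delta_comb_le:
  assumes S: "finite S" "S \<subseteq> linfM M d z"
  shows "dnorm M\<^sub>U d\<^sub>U z\<^sub>U (uprod_delta_comb S c) \<le> unorm U M d z (udelta_comb S c)"
proof (rule ultra.dnorm_le_ballI)
  fix g assume g: "g \<in> lip1_ball M\<^sub>U d\<^sub>U z\<^sub>U"
  show "\<bar>uprod_delta_comb S c g\<bar> \<le> unorm U M d z (udelta_comb S c)"
  proof (rule field_le_mult_one_interval)
    fix t :: real assume t: "0 < t" "t < 1"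
    have "eventually (\<lambda>i. t * \<bar>uprod_delta_comb S c g\<bar> \<le> dnorm (M i) (d i) (z i) (udelta_comb S c i)) U"
      using eventually_lip1_interpolant[OF g S t]
    proof (rule eventually_mono)
      fix i assume "\<exists>h\<in>lip1_ball (M i) (d i) (z i). \<forall>x\<in>S. h (x i) = t * g (cls x)"
      then obtain h where h: "h \<in> lip1_ball (M i) (d i) (z i)" "\<forall>x\<in>S. h (x i) = t * g (cls x)" by blast
      have "udelta_comb S c i h = t * uprod_delta_comb S c g"
        using h(2) by (simp add: udelta_comb_apply[OF h(1)] uprod_delta_comb_apply[OF g] sum_distrib_left
            mult.left_commute)
      then have "t * \<bar>uprod_delta_comb S c g\<bar> = \<bar>udelta_comb S c i h\<bar>" using t by (simp add: abs_mult)
      also have "\<dots> \<le> dnorm (M i) (d i) (z i) (udelta_comb S c i)"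
        using udelta_comb_in_linfF[OF S] h(1) by (intro coord.abs_le_dnorm linfF_dual_bounded)
      finally show "t * \<bar>uprod_delta_comb S c g\<bar> \<le> dnorm (M i) (d i) (z i) (udelta_comb S c i)" .
    qed
    then show "t * \<bar>uprod_delta_comb S c g\<bar> \<le> unorm U M d z (udelta_comb S c)"
      by (rule tendsto_lowerbound[OF unorm_tendsto[OF udelta_comb_in_linfF[OF S]] _ U_proper])
  qed
qed

lemma unorm_udelta_comb_le:
  assumes S: "finite S" "S \<subseteq> linfM M d z"
  shows "unorm U M d z (udelta_comb S c) \<le> dnorm M\<^sub>U d\<^sub>U z\<^sub>U (uprod_delta_comb S c)"
proof (rule field_le_epsilon)
  fix \<epsilon> :: real assume "0 < \<epsilon>"
  let ?N = "\<lambda>i. dnorm (M i) (d i) (z i) (udelta_comb S c i)"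
  have J: "udelta_comb S c \<in> linfF M d z" by (rule udelta_comb_in_linfF[OF S])
  have "\<forall>i. \<exists>f\<in>lip1_ball (M i) (d i) (z i). ?N i - \<epsilon> < \<bar>udelta_comb S c i f\<bar>"
    using coord.dnorm_approx[OF linfF_dual_bounded[OF J] \<open>0 < \<epsilon>\<close>] by blast
  then obtain F where F: "\<And>i. F i \<in> lip1_ball (M i) (d i) (z i)"
    and near: "\<And>i. ?N i - \<epsilon> < \<bar>udelta_comb S c i (F i)\<bar>"
    by metis
  obtain g where g: "g \<in> lip1_ball M\<^sub>U d\<^sub>U z\<^sub>U"
    and lim: "\<And>x. x \<in> linfM M d z \<Longrightarrow> ((\<lambda>i. F i (x i)) \<longlongrightarrow> g (cls x)) U"
    using ultralimit_lip1[OF F] by blast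
  have "((\<lambda>i. \<Sum>x\<in>S. c x * F i (x i)) \<longlongrightarrow> (\<Sum>x\<in>S. c x * g (cls x))) U"
    using S(2) lim by (intro tendsto_sum tendsto_mult_left) auto
  then have "((\<lambda>i. \<bar>udelta_comb S c i (F i)\<bar>) \<longlongrightarrow> \<bar>uprod_delta_comb S c g\<bar>) U"
    by (simp add: udelta_comb_apply[OF F] uprod_delta_comb_apply[OF g] tendsto_rabs)
  moreover have "((\<lambda>i. ?N i - \<epsilon>) \<longlongrightarrow> unorm U M d z (udelta_comb S c) - \<epsilon>) U"
    by (intro tendsto_diff unorm_tendsto[OF J] tendsto_const)
  ultimately have "unorm U M d z (udelta_comb S c) - \<epsilon> \<le> \<bar>uprod_delta_comb S c g\<bar>"
    using near by (intro tendsto_le[OF U_proper] always_eventually) (auto intro: less_imp_le)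
  also have "\<dots> \<le> dnorm M\<^sub>U d\<^sub>U z\<^sub>U (uprod_delta_comb S c)"
    using uprod_delta_comb_in_fspan[OF S] g by (intro ultra.abs_le_dnorm ultra.fspan_dual_bounded)
  finally show "unorm U M d z (udelta_comb S c) \<le> dnorm M\<^sub>U d\<^sub>U z\<^sub>U (uprod_delta_comb S c) + \<epsilon>"
    by simp
qed

lemma unorm_udelta_comb:
  "finite S \<Longrightarrow> S \<subseteq> linfM M d z \<Longrightarrow>
    unorm U M d z (udelta_comb S c) = dnorm M\<^sub>U d\<^sub>U z\<^sub>U (uprod_delta_comb S c)"
  by (intro antisym unorm_udelta_comb_le dnorm_uprod_delta_comb_le)

lemma linfF_complete:
  assumes J: "\<And>m. J m \<in> linfF M d z"
    and fast: "\<And>m. unorm U M d z (\<lambda>i f. J m i f - J (Suc m) i f) < (1/2)^m"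
  shows "\<exists>\<Phi>\<in>linfF M d z. \<forall>n. unorm U M d z (\<lambda>i f. \<Phi> i f - J n i f) \<le> 2 * (1/2)^n"
proof -
  let ?good = "\<lambda>i k. dnorm (M i) (d i) (z i) (\<lambda>f. J k i f - J (Suc k) i f) \<le> (1/2)^k"
  have "\<exists>\<xi>\<in>free (M i) (d i) (z i).
      \<forall>n. (\<forall>k<n. ?good i k) \<longrightarrow> dnorm (M i) (d i) (z i) (\<lambda>f. \<xi> f - J n i f) \<le> 2 * (1/2)^n" for i
    by (rule coord.free_complete_truncated) (rule linfF_free[OF J])
  then have "\<forall>i. \<exists>\<xi>. \<xi> \<in> free (M i) (d i) (z i) \<and>
      (\<forall>n. (\<forall>k<n. ?good i k) \<longrightarrow> dnorm (M i) (d i) (z i) (\<lambda>f. \<xi> f - J n i f) \<le> 2 * (1/2)^n)"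
    by blast
  then obtain \<Phi> where \<Phi>: "\<And>i. \<Phi> i \<in> free (M i) (d i) (z i)"
    and close: "\<And>i n. \<forall>k<n. ?good i k \<Longrightarrow> dnorm (M i) (d i) (z i) (\<lambda>f. \<Phi> i f - J n i f) \<le> 2 * (1/2)^n"
    unfolding choice_iff by blast
  obtain B where B: "\<And>i. dnorm (M i) (d i) (z i) (J 0 i) \<le> B" using J[of 0] unfolding linfF_def by blast
  have "dnorm (M i) (d i) (z i) (\<Phi> i) \<le> 2 + B" for i
  proof -
    have "dnorm (M i) (d i) (z i) (\<lambda>f. 1 * (\<Phi> i f - J 0 i f) + 1 * J 0 i f)
        \<le> \<bar>1\<bar> * dnorm (M i) (d i) (z i) (\<lambda>f. \<Phi> i f - J 0 i f) + \<bar>1\<bar> * dnorm (M i) (d i) (z i) (J 0 i)"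
      using coord.free_dual_bounded[OF \<Phi>[of i]] linfF_dual_bounded[OF J[of 0]]
      by (intro coord.dnorm_lincomb_le coord.dual_bounded_diff)
    then show ?thesis using close[of 0 i] B[of i] by simp
  qed
  with \<Phi> have \<Phi>_linfF: "\<Phi> \<in> linfF M d z" unfolding linfF_def by blast
  have "unorm U M d z (\<lambda>i f. \<Phi> i f - J n i f) \<le> 2 * (1/2)^n" for n
  proof (rule unorm_le_eventually[OF linfF_diff[OF \<Phi>_linfF J]])
    have "eventually (\<lambda>i. ?good i k) U" for k
      using eventually_dnorm_less[OF linfF_diff[OF J J] fast, of k] by (rule eventually_mono) simp
    then have "eventually (\<lambda>i. \<forall>k\<in>{..<n}. ?good i k) U"
      by (intro eventually_ball_finite) auto
    then show "eventually (\<lambda>i. dnorm (M i) (d i) (z i) (\<lambda>f. \<Phi> i f - J n i f) \<le> 2 * (1/2)^n) U"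
      by (rule eventually_mono) (simp add: close)
  qed
  with \<Phi>_linfF show ?thesis by blast
qed

lemma unorm_udelta_comb_diff:
  assumes "finite S1" "S1 \<subseteq> linfM M d z" "finite S2" "S2 \<subseteq> linfM M d z"
  shows "unorm U M d z (\<lambda>i f. udelta_comb S1 c1 i f - udelta_comb S2 c2 i f)
    = dnorm M\<^sub>U d\<^sub>U z\<^sub>U (\<lambda>g. uprod_delta_comb S1 c1 g - uprod_delta_comb S2 c2 g)"
proof -
  obtain S c where S: "finite S" "S \<subseteq> linfM M d z"
    and J: "udelta_comb S c = (\<lambda>i f. 1 * udelta_comb S1 c1 i f + (-1) * udelta_comb S2 c2 i f)"
    and P: "uprod_delta_comb S c = (\<lambda>g. 1 * uprod_delta_comb S1 c1 g + (-1) * uprod_delta_comb S2 c2 g)"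
    by (rule comb_lincomb[OF assms])
  from unorm_udelta_comb[OF S, of c] show ?thesis unfolding J P by simp
qed

section \<open>The isometry\<close>

text \<open>Up to \<open>unorm\<close>-null families, this relation is the graph of the isometry
  \<open>\<F>((M\<^sub>i)\<^sub>U) \<rightarrow> (\<F>(M\<^sub>i))\<^sub>U\<close>: both sides are limits of the same finite combinations of
  evaluations.\<close>

definition represents :: "((('i \<Rightarrow> 'a) set \<Rightarrow> real) \<Rightarrow> real) \<Rightarrow> ('i \<Rightarrow> ('a \<Rightarrow> real) \<Rightarrow> real) \<Rightarrow> bool" where
  "represents \<phi> \<Phi> \<longleftrightarrow> \<phi> \<in> free M\<^sub>U d\<^sub>U z\<^sub>U \<and> \<Phi> \<in> linfF M d z \<and>
    (\<forall>\<epsilon>>0. \<exists>S c. finite S \<and> S \<subseteq> linfM M d z \<and>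
      dnorm M\<^sub>U d\<^sub>U z\<^sub>U (\<lambda>g. \<phi> g - uprod_delta_comb S c g) \<le> \<epsilon> \<and>
      unorm U M d z (\<lambda>i f. \<Phi> i f - udelta_comb S c i f) \<le> \<epsilon>)"

lemma representsD:
  assumes "represents \<phi> \<Phi>" "0 < \<epsilon>"
  obtains S c where "finite S" "S \<subseteq> linfM M d z"
    "dnorm M\<^sub>U d\<^sub>U z\<^sub>U (\<lambda>g. \<phi> g - uprod_delta_comb S c g) \<le> \<epsilon>"
    "unorm U M d z (\<lambda>i f. \<Phi> i f - udelta_comb S c i f) \<le> \<epsilon>"
  using assms unfolding represents_def by blast

lemma represents_udelta_comb:
  assumes "finite S" "S \<subseteq> linfM M d z"
  shows "represents (uprod_delta_comb S c) (udelta_comb S c)"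
  unfolding represents_def
proof (intro conjI allI impI)
  show "uprod_delta_comb S c \<in> free M\<^sub>U d\<^sub>U z\<^sub>U"
    using ultra.fspan_subset_free uprod_delta_comb_in_fspan[OF assms] by blast
  show "udelta_comb S c \<in> linfF M d z" by (rule udelta_comb_in_linfF[OF assms])
  fix \<epsilon> :: real assume "0 < \<epsilon>"
  then show "\<exists>S' c'. finite S' \<and> S' \<subseteq> linfM M d z \<and>
      dnorm M\<^sub>U d\<^sub>U z\<^sub>U (\<lambda>g. uprod_delta_comb S c g - uprod_delta_comb S' c' g) \<le> \<epsilon> \<and>
      unorm U M d z (\<lambda>i f. udelta_comb S c i f - udelta_comb S' c' i f) \<le> \<epsilon>"
    using assms by (intro exI[of _ S] exI[of _ c]) (simp add: ultra.dnorm_zero unorm_zero)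
qed

lemma represents_isometry:
  assumes \<phi>: "represents \<phi> \<Phi>" and \<psi>: "represents \<psi> \<Psi>"
  shows "unorm U M d z (\<lambda>i f. \<Phi> i f - \<Psi> i f) = dnorm M\<^sub>U d\<^sub>U z\<^sub>U (\<lambda>g. \<phi> g - \<psi> g)"
proof -
  have bounded: "\<Phi> \<in> linfF M d z" "\<Psi> \<in> linfF M d z"
    "dual_bounded M\<^sub>U d\<^sub>U z\<^sub>U \<phi>" "dual_bounded M\<^sub>U d\<^sub>U z\<^sub>U \<psi>"
    using assms ultra.free_dual_bounded unfolding represents_def by auto
  have close: "\<bar>unorm U M d z (\<lambda>i f. \<Phi> i f - \<Psi> i f) - dnorm M\<^sub>U d\<^sub>U z\<^sub>U (\<lambda>g. \<phi> g - \<psi> g)\<bar> \<le> 4 * \<epsilon>"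
    if \<epsilon>: "0 < \<epsilon>" for \<epsilon>
  proof -
    obtain S1 c1 where S1: "finite S1" "S1 \<subseteq> linfM M d z"
      and P1: "dnorm M\<^sub>U d\<^sub>U z\<^sub>U (\<lambda>g. \<phi> g - uprod_delta_comb S1 c1 g) \<le> \<epsilon>"
      and J1: "unorm U M d z (\<lambda>i f. \<Phi> i f - udelta_comb S1 c1 i f) \<le> \<epsilon>"
      using representsD[OF \<phi> \<epsilon>] by blast
    obtain S2 c2 where S2: "finite S2" "S2 \<subseteq> linfM M d z"
      and P2: "dnorm M\<^sub>U d\<^sub>U z\<^sub>U (\<lambda>g. \<psi> g - uprod_delta_comb S2 c2 g) \<le> \<epsilon>"
      and J2: "unorm U M d z (\<lambda>i f. \<Psi> i f - udelta_comb S2 c2 i f) \<le> \<epsilon>"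
      using representsD[OF \<psi> \<epsilon>] by blast
    let ?J1 = "udelta_comb S1 c1" and ?J2 = "udelta_comb S2 c2"
    let ?P1 = "uprod_delta_comb S1 c1" and ?P2 = "uprod_delta_comb S2 c2"
    have J: "?J1 \<in> linfF M d z" "?J2 \<in> linfF M d z"
      using S1 S2 by (simp_all add: udelta_comb_in_linfF)
    have P: "dual_bounded M\<^sub>U d\<^sub>U z\<^sub>U ?P1" "dual_bounded M\<^sub>U d\<^sub>U z\<^sub>U ?P2"
      using S1 S2 by (simp_all add: uprod_delta_comb_in_fspan ultra.fspan_dual_bounded)
    have "unorm U M d z (\<lambda>i f. (\<Phi> i f - \<Psi> i f) - (?J1 i f - ?J2 i f))
        \<le> unorm U M d z (\<lambda>i f. \<Phi> i f - ?J1 i f) + unorm U M d z (\<lambda>i f. \<Psi> i f - ?J2 i f)"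
      using unorm_lincomb_diff_le[OF bounded(1) J(1) bounded(2) J(2), of 1 "-1"] by simp
    then have "\<bar>unorm U M d z (\<lambda>i f. \<Phi> i f - \<Psi> i f) - unorm U M d z (\<lambda>i f. ?J1 i f - ?J2 i f)\<bar> \<le> 2 * \<epsilon>"
      using unorm_reverse_triangle[OF linfF_diff[OF bounded(1,2)] linfF_diff[OF J]] J1 J2 by linarith
    moreover have "dnorm M\<^sub>U d\<^sub>U z\<^sub>U (\<lambda>g. (\<phi> g - \<psi> g) - (?P1 g - ?P2 g))
        \<le> dnorm M\<^sub>U d\<^sub>U z\<^sub>U (\<lambda>g. \<phi> g - ?P1 g) + dnorm M\<^sub>U d\<^sub>U z\<^sub>U (\<lambda>g. \<psi> g - ?P2 g)"
      using ultra.dnorm_lincomb_diff_le[OF bounded(3) P(1) bounded(4) P(2), of 1 "-1"] by simp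
    then have "\<bar>dnorm M\<^sub>U d\<^sub>U z\<^sub>U (\<lambda>g. \<phi> g - \<psi> g) - dnorm M\<^sub>U d\<^sub>U z\<^sub>U (\<lambda>g. ?P1 g - ?P2 g)\<bar> \<le> 2 * \<epsilon>"
      using ultra.dnorm_reverse_triangle[OF ultra.dual_bounded_diff[OF bounded(3,4)] ultra.dual_bounded_diff[OF P]]
        P1 P2 by linarith
    moreover have "unorm U M d z (\<lambda>i f. ?J1 i f - ?J2 i f) = dnorm M\<^sub>U d\<^sub>U z\<^sub>U (\<lambda>g. ?P1 g - ?P2 g)"
      by (rule unorm_udelta_comb_diff[OF S1 S2])
    ultimately show ?thesis by linarith
  qed
  have "unorm U M d z (\<lambda>i f. \<Phi> i f - \<Psi> i f) - dnorm M\<^sub>U d\<^sub>U z\<^sub>U (\<lambda>g. \<phi> g - \<psi> g) = 0"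
  proof (rule dense_eq0_I)
    fix e :: real assume "0 < e"
    then show "\<bar>unorm U M d z (\<lambda>i f. \<Phi> i f - \<Psi> i f) - dnorm M\<^sub>U d\<^sub>U z\<^sub>U (\<lambda>g. \<phi> g - \<psi> g)\<bar> \<le> e"
      using close[of "e / 4"] by simp
  qed
  then show ?thesis by simp
qed

lemma represents_lincomb:
  assumes \<phi>: "represents \<phi> \<Phi>" and \<psi>: "represents \<psi> \<Psi>"
  shows "represents (\<lambda>g. a * \<phi> g + b * \<psi> g) (\<lambda>i f. a * \<Phi> i f + b * \<Psi> i f)"
proof -
  have mem: "\<phi> \<in> free M\<^sub>U d\<^sub>U z\<^sub>U" "\<psi> \<in> free M\<^sub>U d\<^sub>U z\<^sub>U" "\<Phi> \<in> linfF M d z" "\<Psi> \<in> linfF M d z"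
    using assms unfolding represents_def by auto
  have "\<exists>S c. finite S \<and> S \<subseteq> linfM M d z \<and>
      dnorm M\<^sub>U d\<^sub>U z\<^sub>U (\<lambda>g. (a * \<phi> g + b * \<psi> g) - uprod_delta_comb S c g) \<le> \<epsilon> \<and>
      unorm U M d z (\<lambda>i f. (a * \<Phi> i f + b * \<Psi> i f) - udelta_comb S c i f) \<le> \<epsilon>"
    if "0 < \<epsilon>" for \<epsilon>
  proof -
    let ?e = "\<epsilon> / (\<bar>a\<bar> + \<bar>b\<bar> + 1)"
    have "0 < ?e" using \<open>0 < \<epsilon>\<close> by (simp add: add_pos_nonneg)
    obtain S1 c1 where S1: "finite S1" "S1 \<subseteq> linfM M d z"
      and P1: "dnorm M\<^sub>U d\<^sub>U z\<^sub>U (\<lambda>g. \<phi> g - uprod_delta_comb S1 c1 g) \<le> ?e"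
      and J1: "unorm U M d z (\<lambda>i f. \<Phi> i f - udelta_comb S1 c1 i f) \<le> ?e"
      by (rule representsD[OF \<phi> \<open>0 < ?e\<close>])
    obtain S2 c2 where S2: "finite S2" "S2 \<subseteq> linfM M d z"
      and P2: "dnorm M\<^sub>U d\<^sub>U z\<^sub>U (\<lambda>g. \<psi> g - uprod_delta_comb S2 c2 g) \<le> ?e"
      and J2: "unorm U M d z (\<lambda>i f. \<Psi> i f - udelta_comb S2 c2 i f) \<le> ?e"
      by (rule representsD[OF \<psi> \<open>0 < ?e\<close>])
    obtain S c where S: "finite S" "S \<subseteq> linfM M d z"
      and J: "udelta_comb S c = (\<lambda>i f. a * udelta_comb S1 c1 i f + b * udelta_comb S2 c2 i f)"
      and P: "uprod_delta_comb S c = (\<lambda>g. a * uprod_delta_comb S1 c1 g + b * uprod_delta_comb S2 c2 g)"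
      by (rule comb_lincomb[OF S1 S2])
    have "dnorm M\<^sub>U d\<^sub>U z\<^sub>U (\<lambda>g. (a * \<phi> g + b * \<psi> g) - uprod_delta_comb S c g)
        \<le> \<bar>a\<bar> * dnorm M\<^sub>U d\<^sub>U z\<^sub>U (\<lambda>g. \<phi> g - uprod_delta_comb S1 c1 g)
          + \<bar>b\<bar> * dnorm M\<^sub>U d\<^sub>U z\<^sub>U (\<lambda>g. \<psi> g - uprod_delta_comb S2 c2 g)"
      unfolding P using mem S1 S2
      by (intro ultra.dnorm_lincomb_diff_le)
        (simp_all add: ultra.free_dual_bounded ultra.fspan_dual_bounded uprod_delta_comb_in_fspan)
    also have "\<dots> \<le> \<epsilon>" by (rule abs_lincomb_le_eps[OF P1 P2 \<open>0 < \<epsilon>\<close>])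
    finally have dnorm_le: "dnorm M\<^sub>U d\<^sub>U z\<^sub>U (\<lambda>g. (a * \<phi> g + b * \<psi> g) - uprod_delta_comb S c g) \<le> \<epsilon>" .
    have "unorm U M d z (\<lambda>i f. (a * \<Phi> i f + b * \<Psi> i f) - udelta_comb S c i f)
        \<le> \<bar>a\<bar> * unorm U M d z (\<lambda>i f. \<Phi> i f - udelta_comb S1 c1 i f)
          + \<bar>b\<bar> * unorm U M d z (\<lambda>i f. \<Psi> i f - udelta_comb S2 c2 i f)"
      unfolding J using mem S1 S2 by (intro unorm_lincomb_diff_le) (simp_all add: udelta_comb_in_linfF)
    also have "\<dots> \<le> \<epsilon>" by (rule abs_lincomb_le_eps[OF J1 J2 \<open>0 < \<epsilon>\<close>])
    finally show ?thesis using S dnorm_le by (intro exI[of _ S] exI[of _ c] conjI)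
  qed
  then show ?thesis unfolding represents_def using mem
    by (simp add: ultra.free_lincomb linfF_lincomb)
qed

lemma represents_cong:
  assumes \<Psi>: "represents \<phi> \<Psi>" and \<Phi>: "\<Phi> \<in> linfF M d z"
    and null: "unorm U M d z (\<lambda>i f. \<Phi> i f - \<Psi> i f) = 0"
  shows "represents \<phi> \<Phi>"
proof -
  have "\<exists>S c. finite S \<and> S \<subseteq> linfM M d z \<and>
      dnorm M\<^sub>U d\<^sub>U z\<^sub>U (\<lambda>g. \<phi> g - uprod_delta_comb S c g) \<le> \<epsilon> \<and>
      unorm U M d z (\<lambda>i f. \<Phi> i f - udelta_comb S c i f) \<le> \<epsilon>"
    if "0 < \<epsilon>" for \<epsilon>
  proof -
    obtain S c where S: "finite S" "S \<subseteq> linfM M d z"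
      and P: "dnorm M\<^sub>U d\<^sub>U z\<^sub>U (\<lambda>g. \<phi> g - uprod_delta_comb S c g) \<le> \<epsilon>"
      and J: "unorm U M d z (\<lambda>i f. \<Psi> i f - udelta_comb S c i f) \<le> \<epsilon>"
      by (rule representsD[OF \<Psi> \<open>0 < \<epsilon>\<close>])
    have "unorm U M d z (\<lambda>i f. \<Phi> i f - udelta_comb S c i f)
        \<le> unorm U M d z (\<lambda>i f. \<Phi> i f - \<Psi> i f) + unorm U M d z (\<lambda>i f. \<Psi> i f - udelta_comb S c i f)"
      using \<Psi> \<Phi> S by (intro unorm_triangle udelta_comb_in_linfF) (simp_all add: represents_def)
    then show ?thesis using S P J null by (intro exI[of _ S] exI[of _ c] conjI) simp_all
  qed
  then show ?thesis using \<Psi> \<Phi> unfolding represents_def by blast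
qed

lemma represents_in_closure:
  assumes "represents \<phi> \<Phi>"
  shows "\<Phi> \<in> udelta_span_closure U M d z"
proof -
  have "\<exists>S c. finite S \<and> S \<subseteq> linfM M d z \<and> unorm U M d z (\<lambda>i f. \<Phi> i f - udelta_comb S c i f) \<le> e"
    if "0 < e" for e
  proof -
    obtain S c where "finite S" "S \<subseteq> linfM M d z"
      "unorm U M d z (\<lambda>i f. \<Phi> i f - udelta_comb S c i f) \<le> e"
      by (rule representsD[OF assms \<open>0 < e\<close>])
    then show ?thesis by blast
  qed
  then show ?thesis using assms unfolding udelta_span_closure_def represents_def udelta_comb_def by blast
qed

lemma represents_seqI:
  assumes "\<phi> \<in> free M\<^sub>U d\<^sub>U z\<^sub>U" "\<Phi> \<in> linfF M d z" "\<And>n. finite (S n)" "\<And>n. S n \<subseteq> linfM M d z"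
    and "\<And>n. dnorm M\<^sub>U d\<^sub>U z\<^sub>U (\<lambda>g. \<phi> g - uprod_delta_comb (S n) (c n) g) \<le> 2 * (1/2)^n"
    and "\<And>n. unorm U M d z (\<lambda>i f. \<Phi> i f - udelta_comb (S n) (c n) i f) \<le> 2 * (1/2)^n"
  shows "represents \<phi> \<Phi>"
  unfolding represents_def
proof (intro conjI allI impI assms(1,2))
  fix \<epsilon> :: real assume "0 < \<epsilon>"
  then obtain n where "(1/2::real)^n < \<epsilon> / 2" using real_arch_pow_inv[of "\<epsilon>/2" "1/2"] by auto
  then have "2 * (1/2::real)^n \<le> \<epsilon>" by linarith
  then show "\<exists>S c. finite S \<and> S \<subseteq> linfM M d z \<and>
      dnorm M\<^sub>U d\<^sub>U z\<^sub>U (\<lambda>g. \<phi> g - uprod_delta_comb S c g) \<le> \<epsilon> \<and>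
      unorm U M d z (\<lambda>i f. \<Phi> i f - udelta_comb S c i f) \<le> \<epsilon>"
    using assms(3-6)[of n] by (intro exI[of _ "S n"] exI[of _ "c n"] conjI) simp_all
qed

lemma free_uprod_approx_seq:
  assumes \<phi>: "\<phi> \<in> free M\<^sub>U d\<^sub>U z\<^sub>U"
  shows "\<exists>S c. \<forall>n. finite (S n) \<and> S n \<subseteq> linfM M d z \<and>
    dnorm M\<^sub>U d\<^sub>U z\<^sub>U (\<lambda>g. \<phi> g - uprod_delta_comb (S n) (c n) g) \<le> (1/2)^Suc n"
proof -
  have "\<exists>S c. finite S \<and> S \<subseteq> linfM M d z \<and>
      dnorm M\<^sub>U d\<^sub>U z\<^sub>U (\<lambda>g. \<phi> g - uprod_delta_comb S c g) \<le> (1/2)^Suc n" for n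
  proof -
    obtain \<psi> where \<psi>: "\<psi> \<in> fspan M\<^sub>U d\<^sub>U z\<^sub>U" "dnorm M\<^sub>U d\<^sub>U z\<^sub>U (\<lambda>g. \<phi> g - \<psi> g) \<le> (1/2)^Suc n"
      using ultra.free_approx[OF \<phi>, of "(1/2)^Suc n"] by auto
    obtain S c where "finite S" "S \<subseteq> linfM M d z" "\<psi> = uprod_delta_comb S c"
      using fspan_uprod_delta_comb[OF \<psi>(1)] by blast
    with \<psi>(2) show ?thesis by blast
  qed
  then have "\<forall>n. \<exists>S c. finite S \<and> S \<subseteq> linfM M d z \<and>
      dnorm M\<^sub>U d\<^sub>U z\<^sub>U (\<lambda>g. \<phi> g - uprod_delta_comb S c g) \<le> (1/2)^Suc n" by blast
  then show ?thesis unfolding choice_iff by blast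
qed

lemma represents_exists:
  assumes \<phi>: "\<phi> \<in> free M\<^sub>U d\<^sub>U z\<^sub>U"
  shows "\<exists>\<Phi>. represents \<phi> \<Phi>"
proof -
  from free_uprod_approx_seq[OF \<phi>] obtain S c where Sc: "\<forall>n. finite (S n) \<and> S n \<subseteq> linfM M d z \<and>
      dnorm M\<^sub>U d\<^sub>U z\<^sub>U (\<lambda>g. \<phi> g - uprod_delta_comb (S n) (c n) g) \<le> (1/2)^Suc n"
    by blast
  then have S: "\<And>n. finite (S n)" "\<And>n. S n \<subseteq> linfM M d z"
    and P: "\<And>n. dnorm M\<^sub>U d\<^sub>U z\<^sub>U (\<lambda>g. \<phi> g - uprod_delta_comb (S n) (c n) g) \<le> (1/2)^Suc n"
    by simp_all
  let ?P = "\<lambda>n. uprod_delta_comb (S n) (c n)" and ?J = "\<lambda>n. udelta_comb (S n) (c n)"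
  have bounded: "dual_bounded M\<^sub>U d\<^sub>U z\<^sub>U \<phi>" "\<And>n. dual_bounded M\<^sub>U d\<^sub>U z\<^sub>U (?P n)"
    using \<phi> S by (simp_all add: ultra.free_dual_bounded ultra.fspan_dual_bounded uprod_delta_comb_in_fspan)
  have "unorm U M d z (\<lambda>i f. ?J n i f - ?J (Suc n) i f) < (1/2)^n" for n
  proof -
    have "unorm U M d z (\<lambda>i f. ?J n i f - ?J (Suc n) i f) = dnorm M\<^sub>U d\<^sub>U z\<^sub>U (\<lambda>g. ?P n g - ?P (Suc n) g)"
      by (rule unorm_udelta_comb_diff[OF S(1,2) S(1,2)])
    also have "\<dots> \<le> dnorm M\<^sub>U d\<^sub>U z\<^sub>U (\<lambda>g. ?P n g - \<phi> g) + dnorm M\<^sub>U d\<^sub>U z\<^sub>U (\<lambda>g. \<phi> g - ?P (Suc n) g)"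
      by (rule ultra.dnorm_triangle[OF bounded(2) bounded(1) bounded(2)])
    also have "\<dots> \<le> (1/2)^Suc n + (1/2)^Suc (Suc n)"
      using P[of n] P[of "Suc n"] ultra.dnorm_commute[of "?P n" \<phi>] by linarith
    also have "\<dots> < (1/2)^n" by simp
    finally show ?thesis .
  qed
  moreover have "?J n \<in> linfF M d z" for n by (rule udelta_comb_in_linfF[OF S(1,2)])
  ultimately obtain \<Phi> where \<Phi>: "\<Phi> \<in> linfF M d z"
    and J: "\<And>n. unorm U M d z (\<lambda>i f. \<Phi> i f - ?J n i f) \<le> 2 * (1/2)^n"
    using linfF_complete[of ?J] by blast
  have "dnorm M\<^sub>U d\<^sub>U z\<^sub>U (\<lambda>g. \<phi> g - ?P n g) \<le> 2 * (1/2)^n" for n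
    by (rule order_trans[OF P]) simp
  then show ?thesis using represents_seqI[OF \<phi> \<Phi> S _ J] by blast
qed

lemma span_closure_approx_seq:
  assumes "\<Phi> \<in> udelta_span_closure U M d z"
  shows "\<exists>S c. \<forall>n. finite (S n) \<and> S n \<subseteq> linfM M d z \<and>
    unorm U M d z (\<lambda>i f. \<Phi> i f - udelta_comb (S n) (c n) i f) \<le> (1/2)^Suc n"
proof -
  have approx: "\<exists>S c. finite S \<and> S \<subseteq> linfM M d z \<and>
      unorm U M d z (\<lambda>i f. \<Phi> i f - udelta_comb S c i f) \<le> e" if "0 < e" for e
    using assms that unfolding udelta_span_closure_def udelta_comb_def by blast
  have "\<forall>n. \<exists>S c. finite S \<and> S \<subseteq> linfM M d z \<and>
      unorm U M d z (\<lambda>i f. \<Phi> i f - udelta_comb S c i f) \<le> (1/2)^Suc n"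
    by (intro allI approx) simp
  then show ?thesis unfolding choice_iff by blast
qed

lemma closure_represents:
  assumes "\<Phi> \<in> udelta_span_closure U M d z"
  shows "\<exists>\<phi>. represents \<phi> \<Phi>"
proof -
  have \<Phi>: "\<Phi> \<in> linfF M d z" using assms unfolding udelta_span_closure_def by blast
  from span_closure_approx_seq[OF assms] obtain S c where Sc: "\<forall>n. finite (S n) \<and> S n \<subseteq> linfM M d z \<and>
      unorm U M d z (\<lambda>i f. \<Phi> i f - udelta_comb (S n) (c n) i f) \<le> (1/2)^Suc n"
    by blast
  then have S: "\<And>n. finite (S n)" "\<And>n. S n \<subseteq> linfM M d z"
    and J: "\<And>n. unorm U M d z (\<lambda>i f. \<Phi> i f - udelta_comb (S n) (c n) i f) \<le> (1/2)^Suc n"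
    by simp_all
  let ?P = "\<lambda>n. uprod_delta_comb (S n) (c n)" and ?J = "\<lambda>n. udelta_comb (S n) (c n)"
  have J_linfF: "?J n \<in> linfF M d z" for n by (rule udelta_comb_in_linfF[OF S(1,2)])
  have "dnorm M\<^sub>U d\<^sub>U z\<^sub>U (\<lambda>g. ?P n g - ?P (Suc n) g) \<le> (1/2)^n" for n
  proof -
    have "dnorm M\<^sub>U d\<^sub>U z\<^sub>U (\<lambda>g. ?P n g - ?P (Suc n) g) = unorm U M d z (\<lambda>i f. ?J n i f - ?J (Suc n) i f)"
      by (rule unorm_udelta_comb_diff[OF S(1,2) S(1,2), symmetric])
    also have "\<dots> \<le> unorm U M d z (\<lambda>i f. ?J n i f - \<Phi> i f) + unorm U M d z (\<lambda>i f. \<Phi> i f - ?J (Suc n) i f)"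
      by (rule unorm_triangle[OF J_linfF \<Phi> J_linfF])
    also have "\<dots> \<le> (1/2)^Suc n + (1/2)^Suc (Suc n)"
      using J[of n] J[of "Suc n"] unorm_commute[of "?J n" \<Phi>] by linarith
    also have "\<dots> \<le> (1/2)^n" by simp
    finally show ?thesis .
  qed
  moreover have "?P n \<in> free M\<^sub>U d\<^sub>U z\<^sub>U" for n
    using ultra.fspan_subset_free uprod_delta_comb_in_fspan[OF S(1,2)] by blast
  ultimately obtain \<phi> where \<phi>: "\<phi> \<in> free M\<^sub>U d\<^sub>U z\<^sub>U"
    and P: "\<And>n. dnorm M\<^sub>U d\<^sub>U z\<^sub>U (\<lambda>g. \<phi> g - ?P n g) \<le> 2 * (1/2)^n"
    using ultra.free_complete[of ?P] by blast
  have "unorm U M d z (\<lambda>i f. \<Phi> i f - ?J n i f) \<le> 2 * (1/2)^n" for n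
    by (rule order_trans[OF J]) simp
  then show ?thesis using represents_seqI[OF \<phi> \<Phi> S P] by blast
qed

definition lift :: "((('i \<Rightarrow> 'a) set \<Rightarrow> real) \<Rightarrow> real) \<Rightarrow> 'i \<Rightarrow> ('a \<Rightarrow> real) \<Rightarrow> real" where
  "lift \<phi> = (SOME \<Phi>. represents \<phi> \<Phi>)"

lemma represents_lift: "\<phi> \<in> free M\<^sub>U d\<^sub>U z\<^sub>U \<Longrightarrow> represents \<phi> (lift \<phi>)"
  unfolding lift_def by (rule someI_ex[OF represents_exists])

lemma lift_in_linfF: "\<phi> \<in> free M\<^sub>U d\<^sub>U z\<^sub>U \<Longrightarrow> lift \<phi> \<in> linfF M d z"
  using represents_lift by (simp add: represents_def)

lemma unorm_lift_lincomb:
  assumes \<phi>: "\<phi> \<in> free M\<^sub>U d\<^sub>U z\<^sub>U" and \<psi>: "\<psi> \<in> free M\<^sub>U d\<^sub>U z\<^sub>U"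
  shows "unorm U M d z (\<lambda>i f. lift (\<lambda>g. a * \<phi> g + b * \<psi> g) i f - (a * lift \<phi> i f + b * lift \<psi> i f)) = 0"
proof -
  have "represents (\<lambda>g. a * \<phi> g + b * \<psi> g) (\<lambda>i f. a * lift \<phi> i f + b * lift \<psi> i f)"
    using \<phi> \<psi> by (intro represents_lincomb represents_lift)
  from represents_isometry[OF represents_lift[OF ultra.free_lincomb[OF \<phi> \<psi>]] this]
  show ?thesis by (simp add: ultra.dnorm_zero)
qed

lemma unorm_lift: "\<phi> \<in> free M\<^sub>U d\<^sub>U z\<^sub>U \<Longrightarrow> unorm U M d z (lift \<phi>) = dnorm M\<^sub>U d\<^sub>U z\<^sub>U \<phi>"
  using represents_isometry[OF represents_lift represents_udelta_comb[of "{}"]]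
  by (simp add: udelta_comb_def uprod_delta_comb_def)

lemma udelta_span_closure_iff:
  assumes \<Phi>: "\<Phi> \<in> linfF M d z"
  shows "\<Phi> \<in> udelta_span_closure U M d z \<longleftrightarrow>
    (\<exists>\<phi>\<in>free M\<^sub>U d\<^sub>U z\<^sub>U. unorm U M d z (\<lambda>i f. \<Phi> i f - lift \<phi> i f) = 0)"
proof
  assume "\<Phi> \<in> udelta_span_closure U M d z"
  then obtain \<phi> where \<phi>: "represents \<phi> \<Phi>" using closure_represents by blast
  then have "\<phi> \<in> free M\<^sub>U d\<^sub>U z\<^sub>U" by (simp add: represents_def)
  with represents_isometry[OF \<phi> represents_lift[OF this]]
  show "\<exists>\<phi>\<in>free M\<^sub>U d\<^sub>U z\<^sub>U. unorm U M d z (\<lambda>i f. \<Phi> i f - lift \<phi> i f) = 0"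
    by (auto simp: ultra.dnorm_zero)
next
  assume "\<exists>\<phi>\<in>free M\<^sub>U d\<^sub>U z\<^sub>U. unorm U M d z (\<lambda>i f. \<Phi> i f - lift \<phi> i f) = 0"
  then obtain \<phi> where "\<phi> \<in> free M\<^sub>U d\<^sub>U z\<^sub>U" "unorm U M d z (\<lambda>i f. \<Phi> i f - lift \<phi> i f) = 0" by blast
  then show "\<Phi> \<in> udelta_span_closure U M d z"
    by (intro represents_in_closure represents_cong[OF represents_lift \<Phi>])
qed

end

theorem theorem3p4:
  fixes U :: "'i filter" and M :: "'i \<Rightarrow> 'a set"
    and d :: "'i \<Rightarrow> 'a \<Rightarrow> 'a \<Rightarrow> real" and z :: "'i \<Rightarrow> 'a"
  assumes "is_ultrafilter U"
    and "\<forall>i. Metric_space (M i) (d i)"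
    and "\<forall>i. z i \<in> M i"
  shows "\<exists>T :: ((('i \<Rightarrow> 'a) set \<Rightarrow> real) \<Rightarrow> real) \<Rightarrow> ('i \<Rightarrow> ('a \<Rightarrow> real) \<Rightarrow> real).
    (\<forall>\<phi>\<in>free (uprod U M d z) (uprod_dist U d) (uprod_base U M d z).
        T \<phi> \<in> linfF M d z) \<and>
    (\<forall>\<phi>\<in>free (uprod U M d z) (uprod_dist U d) (uprod_base U M d z).
     \<forall>\<psi>\<in>free (uprod U M d z) (uprod_dist U d) (uprod_base U M d z). \<forall>a b.
        unorm U M d z (\<lambda>i f. T (\<lambda>g. a * \<phi> g + b * \<psi> g) i f - (a * T \<phi> i f + b * T \<psi> i f)) = 0) \<and>
    (\<forall>\<phi>\<in>free (uprod U M d z) (uprod_dist U d) (uprod_base U M d z).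
        unorm U M d z (T \<phi>) = dnorm (uprod U M d z) (uprod_dist U d) (uprod_base U M d z) \<phi>) \<and>
    (\<forall>\<Phi>\<in>linfF M d z. \<Phi> \<in> udelta_span_closure U M d z \<longleftrightarrow>
       (\<exists>\<phi>\<in>free (uprod U M d z) (uprod_dist U d) (uprod_base U M d z).
          unorm U M d z (\<lambda>i f. \<Phi> i f - T \<phi> i f) = 0))"
proof -
  interpret metric_ultraproduct U M d z
    using assms by (simp add: metric_ultraproduct_def)
  show ?thesis
    by (intro exI[of _ lift] conjI ballI allI lift_in_linfF unorm_lift_lincomb unorm_lift
        udelta_span_closure_iff)
qed

end
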